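(* Let $\Omega=\mathbb{T}^d$ ($d=2$ or $3$), $\nu,\kappa>0$, and let $(\varrho_n,u_n)$ be a smooth solution, with $\varrho_n>0$, of $$\partial_{t}\varrho_n+\mathrm{div}(\varrho_n u_n)=0,\qquad \partial_{t}(\varrho_n u_n)+\mathrm{div}(\varrho_n u_n\otimes u_n)-2\nu\,\mathrm{div}(\varrho_n D(u_n))=\kappa\varrho_n\nabla\Delta\varrho_n$$ on $\Omega$. Then $$\frac{d}{dt}\int_{\Omega}\nu^{2}\varrho_n|\nabla\log\varrho_n|^{2}dx+\nu\kappa\int_{\Omega}|\nabla\nabla\varrho_n|^{2}dx=-\frac{d}{dt}\int_{\Omega}\nu u_n\cdot\nabla\varrho_n\, dx+\int_{\Omega}\nu\varrho_n\nabla u_n:{}^{t}\nabla u_n\, dx.$$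
   Context: $D(u)=(\nabla u+\nabla^{t}u)/2$, ${}^t\nabla u$ denotes the transpose of $\nabla u$, and $A:B=\sum_{ij}A_{ij}B_{ij}$. *)

theory Defs
  imports "HOL-Analysis.Analysis"
begin

fun Ck_on :: "nat \<Rightarrow> 'a::real_normed_vector set \<Rightarrow> ('a \<Rightarrow> real) \<Rightarrow> bool" where
  "Ck_on 0 S f = continuous_on S f"
| "Ck_on (Suc k) S f = (f differentiable_on S \<and>
      (\<forall>v. Ck_on k S (\<lambda>x. frechet_derivative f (at x) v)))"

definition smooth_on :: "'a::real_normed_vector set \<Rightarrow> ('a \<Rightarrow> real) \<Rightarrow> bool" where
  "smooth_on S f = (\<forall>k. Ck_on k S f)"

definition pd :: "'n::finite \<Rightarrow> (real^'n \<Rightarrow> real) \<Rightarrow> real^'n \<Rightarrow> real" where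
  "pd i f x = deriv (\<lambda>h. f (x + h *\<^sub>R axis i 1)) 0"

definition symgrad :: "(real^'n \<Rightarrow> real^'n) \<Rightarrow> real^'n \<Rightarrow> 'n::finite \<Rightarrow> 'n \<Rightarrow> real" where
  "symgrad v x i j = (pd j (\<lambda>y. v y $ i) x + pd i (\<lambda>y. v y $ j) x) / 2"

definition lap :: "(real^'n::finite \<Rightarrow> real) \<Rightarrow> real^'n \<Rightarrow> real" where
  "lap f x = (\<Sum>k\<in>UNIV. pd k (pd k f) x)"

text \<open>Torus T^d = R^d / Z^d: functions are 1-periodic in every coordinate; the
  integral over Omega is the integral over the unit cube cbox 0 One.\<close>
definition periodic1 :: "(real^'n::finite \<Rightarrow> 'b) \<Rightarrow> bool" where
  "periodic1 f = (\<forall>x i. f (x + axis i 1) = f x)"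

end

(*
  Write L = log rho and C = div u + u . grad L, so that the mass equation reads d_t L = - C.
  Differentiating the Fisher information nu^2 int rho |grad L|^2 and integrating by parts
  gives 2 nu^2 int rho Hess L : D(u).  Differentiating the cross term nu int u . grad rho
  gives nu int d_t (rho u) . grad L + nu int rho C^2.  Inserting the momentum equation, its
  viscous part produces - 2 nu^2 int rho Hess L : D(u), which cancels the first derivative,
  its capillarity part produces - nu kappa int |Hess rho|^2, and its convective part together
  with nu int rho C^2 adds up to nu int rho grad u : (grad u)^t.  Every integration by parts
  rests on int d_j f = 0 over the torus for periodic f, a consequence of the translation
  invariance of the integral over the unit cube.
*)

theory Submission
  imports Defs
begin

section \<open>Directional derivatives and smooth functions\<close>

definition dir_deriv :: "('a::real_normed_vector \<Rightarrow> real) \<Rightarrow> 'a \<Rightarrow> 'a \<Rightarrow> real" where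
  "dir_deriv f v p = frechet_derivative f (at p) v"

lemma Ck_on_Suc_iff:
  "Ck_on (Suc k) S f \<longleftrightarrow> f differentiable_on S \<and> (\<forall>v. Ck_on k S (dir_deriv f v))"
  by (simp add: dir_deriv_def[abs_def])

declare Ck_on.simps(2)[simp del]

lemma has_derivative_dir_deriv:
  "f differentiable (at p) \<Longrightarrow> (f has_derivative (\<lambda>v. dir_deriv f v p)) (at p)"
  unfolding dir_deriv_def by (rule frechet_derivative_works[THEN iffD1])

lemma dir_deriv_eqI: "(f has_derivative f') (at p) \<Longrightarrow> dir_deriv f v p = f' v"
  unfolding dir_deriv_def by (drule frechet_derivative_at) simp

lemma dir_deriv_cong_open:
  assumes "open S" "p \<in> S" "\<And>x. x \<in> S \<Longrightarrow> f x = g x" "f differentiable (at p)"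
  shows "dir_deriv f v p = dir_deriv g v p"
  unfolding dir_deriv_def using frechet_derivative_transform_within_open[of f p S g] assms by simp

lemma differentiable_on_open_transform:
  assumes "open S" "f differentiable_on S" "\<And>x. x \<in> S \<Longrightarrow> f x = g x"
  shows "g differentiable_on S"
  using assms has_derivative_transform_within_open
  by (fastforce simp: differentiable_on_eq_differentiable_at differentiable_def)

lemma Ck_on_SucD: "Ck_on (Suc k) S f \<Longrightarrow> Ck_on k S f"
  by (induction k arbitrary: f) (auto simp: Ck_on_Suc_iff differentiable_imp_continuous_on)

lemma Ck_on_cong:
  assumes "open S" "\<And>x. x \<in> S \<Longrightarrow> f x = g x" "Ck_on k S f"
  shows "Ck_on k S g"
  using assms(2,3)
proof (induction k arbitrary: f g)
  case 0
  then show ?case using continuous_on_cong[of S S f g] by simp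
next
  case (Suc k)
  then have df: "f differentiable_on S" and cf: "\<And>v. Ck_on k S (dir_deriv f v)"
    by (auto simp: Ck_on_Suc_iff)
  have "Ck_on k S (dir_deriv g v)" for v
  proof (rule Suc.IH[OF _ cf])
    fix x assume "x \<in> S"
    with assms(1) df Suc.prems(1) show "dir_deriv f v x = dir_deriv g v x"
      by (intro dir_deriv_cong_open[of S]) (auto simp: differentiable_on_eq_differentiable_at)
  qed
  with differentiable_on_open_transform[OF assms(1) df Suc.prems(1)] show ?case
    by (simp add: Ck_on_Suc_iff)
qed

lemma Ck_on_const: "Ck_on k S (\<lambda>x. c)"
proof (induction k arbitrary: c)
  case (Suc k)
  have deriv_const: "dir_deriv (\<lambda>x. c) v = (\<lambda>x. 0)" for v
    by (intro ext dir_deriv_eqI has_derivative_const)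
  show ?case unfolding Ck_on_Suc_iff deriv_const using Suc.IH by simp
qed simp

lemma Ck_on_add:
  "open S \<Longrightarrow> Ck_on k S f \<Longrightarrow> Ck_on k S g \<Longrightarrow> Ck_on k S (\<lambda>x. f x + g x)"
proof (induction k arbitrary: f g)
  case 0
  then show ?case by (auto intro: continuous_intros)
next
  case (Suc k)
  then have df: "f differentiable_on S" and cf: "\<And>v. Ck_on k S (dir_deriv f v)"
    and dg: "g differentiable_on S" and cg: "\<And>v. Ck_on k S (dir_deriv g v)"
    by (auto simp: Ck_on_Suc_iff)
  have "Ck_on k S (dir_deriv (\<lambda>x. f x + g x) v)" for v
  proof (rule Ck_on_cong[OF Suc.prems(1) _ Suc.IH[OF Suc.prems(1) cf cg]])
    fix x assume "x \<in> S"
    with Suc.prems(1) df dg show "dir_deriv f v x + dir_deriv g v x = dir_deriv (\<lambda>x. f x + g x) v x"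
      by (subst dir_deriv_eqI[OF has_derivative_add[OF has_derivative_dir_deriv has_derivative_dir_deriv]])
        (auto simp: differentiable_on_eq_differentiable_at)
  qed
  with df dg show ?case by (auto simp: Ck_on_Suc_iff intro: differentiable_on_add)
qed

lemma Ck_on_mult:
  "open S \<Longrightarrow> Ck_on k S f \<Longrightarrow> Ck_on k S g \<Longrightarrow> Ck_on k S (\<lambda>x. f x * g x)"
proof (induction k arbitrary: f g)
  case 0
  then show ?case by (auto intro: continuous_intros)
next
  case (Suc k)
  then have df: "f differentiable_on S" and cf: "\<And>v. Ck_on k S (dir_deriv f v)"
    and dg: "g differentiable_on S" and cg: "\<And>v. Ck_on k S (dir_deriv g v)"
    by (auto simp: Ck_on_Suc_iff)
  have f: "Ck_on k S f" and g: "Ck_on k S g"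
    using Suc.prems(2,3) by (auto intro: Ck_on_SucD)
  have "Ck_on k S (dir_deriv (\<lambda>x. f x * g x) v)" for v
  proof (rule Ck_on_cong[OF Suc.prems(1) _
        Ck_on_add[OF Suc.prems(1) Suc.IH[OF Suc.prems(1) f cg] Suc.IH[OF Suc.prems(1) cf g]]])
    fix x assume "x \<in> S"
    with Suc.prems(1) df dg
    show "f x * dir_deriv g v x + dir_deriv f v x * g x = dir_deriv (\<lambda>x. f x * g x) v x"
      by (subst dir_deriv_eqI[OF has_derivative_mult[OF has_derivative_dir_deriv has_derivative_dir_deriv]])
        (auto simp: differentiable_on_eq_differentiable_at)
  qed
  with df dg show ?case by (auto simp: Ck_on_Suc_iff intro: differentiable_on_mult)
qed

lemma Ck_on_inverse:
  "open S \<Longrightarrow> Ck_on k S f \<Longrightarrow> (\<And>x. x \<in> S \<Longrightarrow> f x \<noteq> 0) \<Longrightarrow> Ck_on k S (\<lambda>x. inverse (f x))"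
proof (induction k arbitrary: f)
  case 0
  then show ?case by (auto intro!: continuous_intros)
next
  case (Suc k)
  then have df: "f differentiable_on S" and cf: "\<And>v. Ck_on k S (dir_deriv f v)"
    by (auto simp: Ck_on_Suc_iff)
  have inv: "Ck_on k S (\<lambda>x. inverse (f x))"
    using Suc.IH[OF Suc.prems(1) Ck_on_SucD[OF Suc.prems(2)] Suc.prems(3)] .
  have deriv_inv: "((\<lambda>x. inverse (f x)) has_derivative
      (\<lambda>v. - (inverse (f x) * dir_deriv f v x * inverse (f x)))) (at x)" if "x \<in> S" for x
    using that Suc.prems(1,3) df
    by (intro Deriv.has_derivative_inverse has_derivative_dir_deriv)
      (auto simp: differentiable_on_eq_differentiable_at)
  have "Ck_on k S (dir_deriv (\<lambda>x. inverse (f x)) v)" for v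
    by (rule Ck_on_cong[OF Suc.prems(1) _ Ck_on_mult[OF Suc.prems(1)
          Ck_on_mult[OF Suc.prems(1) Ck_on_mult[OF Suc.prems(1) Ck_on_const[of k S "-1"] cf[of v]] inv] inv]])
      (simp add: dir_deriv_eqI[OF deriv_inv])
  moreover have "(\<lambda>x. inverse (f x)) differentiable_on S"
    using deriv_inv Suc.prems(1)
    by (auto simp: differentiable_on_eq_differentiable_at differentiable_def)
  ultimately show ?case by (simp add: Ck_on_Suc_iff)
qed

lemma smooth_on_differentiable_at: "open S \<Longrightarrow> smooth_on S f \<Longrightarrow> x \<in> S \<Longrightarrow> f differentiable (at x)"
  unfolding smooth_on_def by (metis Ck_on_Suc_iff differentiable_on_eq_differentiable_at)

lemma smooth_on_imp_continuous_on: "smooth_on S f \<Longrightarrow> continuous_on S f"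
  unfolding smooth_on_def by (metis Ck_on.simps(1))

lemma smooth_on_const[simp]: "smooth_on S (\<lambda>x. c)"
  unfolding smooth_on_def using Ck_on_const by blast

lemma smooth_on_add[simp]:
  "open S \<Longrightarrow> smooth_on S f \<Longrightarrow> smooth_on S g \<Longrightarrow> smooth_on S (\<lambda>x. f x + g x)"
  unfolding smooth_on_def using Ck_on_add by blast

lemma smooth_on_mult[simp]:
  "open S \<Longrightarrow> smooth_on S f \<Longrightarrow> smooth_on S g \<Longrightarrow> smooth_on S (\<lambda>x. f x * g x)"
  unfolding smooth_on_def using Ck_on_mult by blast

lemma smooth_on_minus[simp]: "open S \<Longrightarrow> smooth_on S f \<Longrightarrow> smooth_on S (\<lambda>x. - f x)"
  using smooth_on_mult[of S "\<lambda>x. -1" f] by simp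

lemma smooth_on_diff[simp]:
  "open S \<Longrightarrow> smooth_on S f \<Longrightarrow> smooth_on S g \<Longrightarrow> smooth_on S (\<lambda>x. f x - g x)"
  using smooth_on_add[of S f "\<lambda>x. - g x"] by simp

lemma smooth_on_power[simp]: "open S \<Longrightarrow> smooth_on S f \<Longrightarrow> smooth_on S (\<lambda>x. f x ^ n)"
  by (induction n) simp_all

lemma smooth_on_sum[simp]:
  "open S \<Longrightarrow> (\<And>i. smooth_on S (f i)) \<Longrightarrow> smooth_on S (\<lambda>x. \<Sum>i\<in>I. f i x)"
  by (induction I rule: infinite_finite_induct) simp_all

lemma smooth_on_dir_deriv[simp]: "smooth_on S f \<Longrightarrow> smooth_on S (dir_deriv f v)"
  unfolding smooth_on_def by (metis Ck_on_Suc_iff)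

lemma smooth_on_ln:
  assumes S: "open S" and f: "smooth_on S f" and pos: "\<And>x. x \<in> S \<Longrightarrow> f x > 0"
  shows "smooth_on S (\<lambda>x. ln (f x))"
  unfolding smooth_on_def
proof
  fix k
  show "Ck_on k S (\<lambda>x. ln (f x))"
  proof (cases k)
    case 0
    then show ?thesis using smooth_on_imp_continuous_on[OF f] pos
      by (auto simp: less_imp_neq[symmetric] intro!: continuous_intros)
  next
    case (Suc m)
    have df: "f differentiable_on S" and cf: "\<And>v. Ck_on m S (dir_deriv f v)"
      using f[unfolded smooth_on_def, rule_format, of "Suc m"] by (auto simp: Ck_on_Suc_iff)
    have inv: "Ck_on m S (\<lambda>x. inverse (f x))"
      using Ck_on_inverse[OF S] f pos unfolding smooth_on_def by force
    have deriv_ln: "((\<lambda>x. ln (f x)) has_derivative (\<lambda>v. dir_deriv f v x * inverse (f x))) (at x)"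
      if "x \<in> S" for x
      using that S df pos by (intro has_derivative_ln has_derivative_dir_deriv)
        (auto simp: differentiable_on_eq_differentiable_at)
    have "Ck_on m S (dir_deriv (\<lambda>x. ln (f x)) v)" for v
      by (rule Ck_on_cong[OF S _ Ck_on_mult[OF S cf[of v] inv]]) (simp add: dir_deriv_eqI[OF deriv_ln])
    moreover have "(\<lambda>x. ln (f x)) differentiable_on S"
      using deriv_ln S by (auto simp: differentiable_on_eq_differentiable_at differentiable_def)
    ultimately show ?thesis using Suc by (simp add: Ck_on_Suc_iff)
  qed
qed

lemma dir_deriv_const[simp]: "dir_deriv (\<lambda>x. c) v p = 0"
  by (intro dir_deriv_eqI has_derivative_const)

lemma dir_deriv_add:
  "f differentiable (at p) \<Longrightarrow> g differentiable (at p) \<Longrightarrow>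
    dir_deriv (\<lambda>x. f x + g x) v p = dir_deriv f v p + dir_deriv g v p"
  by (subst dir_deriv_eqI[OF has_derivative_add[OF has_derivative_dir_deriv has_derivative_dir_deriv]]) auto

lemma dir_deriv_diff:
  "f differentiable (at p) \<Longrightarrow> g differentiable (at p) \<Longrightarrow>
    dir_deriv (\<lambda>x. f x - g x) v p = dir_deriv f v p - dir_deriv g v p"
  by (subst dir_deriv_eqI[OF has_derivative_diff[OF has_derivative_dir_deriv has_derivative_dir_deriv]]) auto

lemma dir_deriv_mult:
  "f differentiable (at p) \<Longrightarrow> g differentiable (at p) \<Longrightarrow>
    dir_deriv (\<lambda>x. f x * g x) v p = f p * dir_deriv g v p + dir_deriv f v p * g p"
  by (subst dir_deriv_eqI[OF has_derivative_mult[OF has_derivative_dir_deriv has_derivative_dir_deriv]]) auto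

lemma dir_deriv_minus: "f differentiable (at p) \<Longrightarrow> dir_deriv (\<lambda>x. - f x) v p = - dir_deriv f v p"
  by (subst dir_deriv_eqI[OF has_derivative_minus[OF has_derivative_dir_deriv]]) auto

lemma dir_deriv_sum:
  "(\<And>i. i \<in> I \<Longrightarrow> f i differentiable (at p)) \<Longrightarrow>
    dir_deriv (\<lambda>x. \<Sum>i\<in>I. f i x) v p = (\<Sum>i\<in>I. dir_deriv (f i) v p)"
  by (subst dir_deriv_eqI[OF has_derivative_sum[OF has_derivative_dir_deriv]]) auto

lemma dir_deriv_power2:
  "f differentiable (at p) \<Longrightarrow> dir_deriv (\<lambda>x. (f x)^2) v p = 2 * f p * dir_deriv f v p"
  unfolding power2_eq_square by (simp add: dir_deriv_mult)

lemma dir_deriv_ln: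
  "f differentiable (at p) \<Longrightarrow> f p > 0 \<Longrightarrow> dir_deriv (\<lambda>x. ln (f x)) v p = dir_deriv f v p / f p"
  by (subst dir_deriv_eqI[OF has_derivative_ln[OF _ has_derivative_dir_deriv]]) (auto simp: field_simps)

lemma has_field_derivative_dir_deriv_line:
  assumes "f differentiable (at (p + s *\<^sub>R v))"
  shows "((\<lambda>s. f (p + s *\<^sub>R v)) has_field_derivative dir_deriv f v (p + s *\<^sub>R v)) (at s within T)"
proof -
  have lin: "linear (\<lambda>w. dir_deriv f w (p + s *\<^sub>R v))"
    using has_derivative_dir_deriv[OF assms] has_derivative_linear by blast
  have "((\<lambda>s. p + s *\<^sub>R v) has_derivative (\<lambda>s. s *\<^sub>R v)) (at s within T)"
    by (auto intro!: derivative_eq_intros)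
  from has_derivative_compose[OF this has_derivative_dir_deriv[OF assms]] show ?thesis
    unfolding has_field_derivative_def
    by (rule has_derivative_eq_rhs) (simp add: fun_eq_iff linear_scale[OF lin])
qed

section \<open>Symmetry of second derivatives\<close>

lemma Ck_on_2_regularity:
  assumes "open S" "Ck_on 2 S f"
  shows "\<And>x. x \<in> S \<Longrightarrow> f differentiable (at x)"
    and "\<And>v x. x \<in> S \<Longrightarrow> dir_deriv f v differentiable (at x)"
    and "\<And>v. continuous_on S (dir_deriv f v)"
    and "\<And>v w. continuous_on S (dir_deriv (dir_deriv f v) w)"
  using assms
  by (auto simp: numeral_2_eq_2 Ck_on_Suc_iff differentiable_on_eq_differentiable_at
      intro: differentiable_imp_continuous_on)

lemma open_contains_parallelogram:
  fixes p :: "'a::real_normed_vector"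
  assumes "open S" "p \<in> S"
  obtains d where "d > 0" "\<And>a b. \<bar>a\<bar> \<le> d \<Longrightarrow> \<bar>b\<bar> \<le> d \<Longrightarrow> p + a *\<^sub>R v + b *\<^sub>R w \<in> S"
proof -
  obtain e where e: "e > 0" "cball p e \<subseteq> S"
    using assms open_contains_cball by blast
  have n: "norm v + norm w + 1 > 0" by (simp add: add_nonneg_pos)
  define d where "d = e / (norm v + norm w + 1)"
  have "d > 0" using e n by (simp add: d_def)
  moreover have "p + a *\<^sub>R v + b *\<^sub>R w \<in> S" if "\<bar>a\<bar> \<le> d" "\<bar>b\<bar> \<le> d" for a b
  proof -
    have "norm (a *\<^sub>R v + b *\<^sub>R w) \<le> \<bar>a\<bar> * norm v + \<bar>b\<bar> * norm w"
      by (metis norm_scaleR norm_triangle_ineq)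
    also have "\<dots> \<le> d * (norm v + norm w + 1)"
      using that by (simp add: distrib_left add_mono mult_right_mono add_increasing2)
    also have "\<dots> = e" using n by (simp add: d_def)
    finally have "p + a *\<^sub>R v + b *\<^sub>R w \<in> cball p e"
      by (simp add: dist_norm add.assoc norm_minus_commute add.commute)
    then show ?thesis using e by blast
  qed
  ultimately show thesis using that by blast
qed

lemma dir_deriv_line_integral:
  assumes "c \<le> b" "\<And>s. s \<in> {c..b} \<Longrightarrow> f differentiable (at (p + s *\<^sub>R w))"
  shows "f (p + b *\<^sub>R w) - f (p + c *\<^sub>R w) = integral {c..b} (\<lambda>s. dir_deriv f w (p + s *\<^sub>R w))"
proof -
  have "((\<lambda>s. dir_deriv f w (p + s *\<^sub>R w)) has_integral f (p + b *\<^sub>R w) - f (p + c *\<^sub>R w)) {c..b}"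
    using assms by (intro fundamental_theorem_of_calculus)
      (auto simp: has_real_derivative_iff_has_vector_derivative[symmetric]
        intro!: has_field_derivative_dir_deriv_line)
  then show ?thesis by (rule integral_unique[symmetric])
qed

lemma has_field_derivative_integral_along_line:
  assumes S: "open S" and f: "Ck_on 2 S f" and d: "d > 0"
    and in_S: "\<And>a s. a \<in> {-d<..<d} \<Longrightarrow> s \<in> {c..b} \<Longrightarrow> p + a *\<^sub>R v + s *\<^sub>R w \<in> S"
  shows "((\<lambda>a. integral {c..b} (\<lambda>s. dir_deriv f w (p + a *\<^sub>R v + s *\<^sub>R w))) has_field_derivative
      integral {c..b} (\<lambda>s. dir_deriv (dir_deriv f w) v (p + s *\<^sub>R w))) (at 0)"
proof -
  note reg = Ck_on_2_regularity[OF S f]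
  define q where "q a s = p + a *\<^sub>R v + s *\<^sub>R w" for a s
  let ?U = "{-d<..<d}"
  have "((\<lambda>a. integral (cbox c b) (\<lambda>s. dir_deriv f w (q a s))) has_field_derivative
      integral (cbox c b) (\<lambda>s. dir_deriv (dir_deriv f w) v (q 0 s))) (at 0 within ?U)"
  proof (rule leibniz_rule_field_derivative)
    fix a s assume "a \<in> ?U" "s \<in> cbox c b"
    moreover have "q a s = (p + s *\<^sub>R w) + a *\<^sub>R v" by (simp add: q_def algebra_simps)
    ultimately show "((\<lambda>a. dir_deriv f w (q a s)) has_field_derivative dir_deriv (dir_deriv f w) v (q a s))
        (at a within ?U)"
      using in_S[of a s] has_field_derivative_dir_deriv_line[OF reg(2), of "p + s *\<^sub>R w" a v]
      by (simp add: q_def cbox_interval algebra_simps)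
  next
    fix a assume a: "a \<in> ?U"
    have "continuous_on (cbox c b) (\<lambda>s. dir_deriv f w (q a s))"
    proof (rule continuous_on_compose2[OF reg(3)])
      show "continuous_on (cbox c b) (q a)"
        unfolding q_def by (intro continuous_intros)
      show "q a ` cbox c b \<subseteq> S"
        using a in_S by (auto simp: q_def cbox_interval)
    qed
    then show "(\<lambda>s. dir_deriv f w (q a s)) integrable_on cbox c b"
      by (rule integrable_continuous)
  next
    have "continuous_on (?U \<times> cbox c b) (\<lambda>x. dir_deriv (dir_deriv f w) v ((\<lambda>(a, s). q a s) x))"
    proof (rule continuous_on_compose2[OF reg(4)])
      show "continuous_on (?U \<times> cbox c b) (\<lambda>(a, s). q a s)"
        unfolding q_def split_beta by (intro continuous_intros)
      show "(\<lambda>(a, s). q a s) ` (?U \<times> cbox c b) \<subseteq> S"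
        using in_S by (auto simp: q_def cbox_interval)
    qed
    then show "continuous_on (?U \<times> cbox c b) (\<lambda>(a, s). dir_deriv (dir_deriv f w) v (q a s))"
      by (simp add: split_beta)
  qed (use d in auto)
  then show ?thesis
    using d by (simp add: q_def cbox_interval at_within_open[of 0 ?U])
qed

text \<open>Differentiate \<open>f (p + a v + b w) - f (p + a v - d w) = \<integral>\<^bsub>-d..b\<^esub> \<partial>\<^sub>w f (p + a v + s w) ds\<close>
  with respect to \<open>a\<close> at \<open>0\<close>, under the integral sign.\<close>

lemma dir_deriv_line_integral_dir_deriv:
  assumes S: "open S" and f: "Ck_on 2 S f" and d: "d > 0" "\<bar>b\<bar> \<le> d"
    and square: "\<And>a b. \<bar>a\<bar> \<le> d \<Longrightarrow> \<bar>b\<bar> \<le> d \<Longrightarrow> p + a *\<^sub>R v + b *\<^sub>R w \<in> S"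
  shows "dir_deriv f v (p + b *\<^sub>R w) - dir_deriv f v (p + (-d) *\<^sub>R w)
    = integral {-d..b} (\<lambda>s. dir_deriv (dir_deriv f w) v (p + s *\<^sub>R w))"
proof -
  note reg = Ck_on_2_regularity[OF S f]
  have in_S: "p + a *\<^sub>R v + s *\<^sub>R w \<in> S" if "a \<in> {-d<..<d}" "s \<in> {-d..b}" for a s
    using that d by (auto intro!: square)
  have base: "p + a *\<^sub>R v + s *\<^sub>R w = (p + s *\<^sub>R w) + a *\<^sub>R v" for a s
    by (simp add: algebra_simps)
  have "((\<lambda>a. f (p + a *\<^sub>R v + b *\<^sub>R w) - f (p + a *\<^sub>R v + (-d) *\<^sub>R w)) has_field_derivative
      dir_deriv f v (p + b *\<^sub>R w) - dir_deriv f v (p + (-d) *\<^sub>R w)) (at 0)"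
    unfolding base using in_S[of 0 b] in_S[of 0 "-d"] d
    by (intro DERIV_diff has_field_derivative_dir_deriv_line[of f _ 0, simplified] reg(1)) auto
  moreover have "((\<lambda>a. f (p + a *\<^sub>R v + b *\<^sub>R w) - f (p + a *\<^sub>R v + (-d) *\<^sub>R w)) has_field_derivative
      integral {-d..b} (\<lambda>s. dir_deriv (dir_deriv f w) v (p + s *\<^sub>R w))) (at 0)"
  proof (rule has_field_derivative_transform_within_open[OF
        has_field_derivative_integral_along_line[OF S f d(1) in_S]])
    fix a assume "a \<in> {-d<..<d}"
    then show "integral {-d..b} (\<lambda>s. dir_deriv f w (p + a *\<^sub>R v + s *\<^sub>R w))
        = f (p + a *\<^sub>R v + b *\<^sub>R w) - f (p + a *\<^sub>R v + (-d) *\<^sub>R w)"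
      using d in_S by (intro dir_deriv_line_integral[symmetric] reg(1)) auto
  qed (use d in auto)
  ultimately show ?thesis by (rule DERIV_unique)
qed

lemma Ck_on_2_dir_deriv_swap:
  assumes S: "open S" and f: "Ck_on 2 S f" and p: "p \<in> S"
  shows "dir_deriv (dir_deriv f v) w p = dir_deriv (dir_deriv f w) v p"
proof -
  note reg = Ck_on_2_regularity[OF S f]
  obtain d where d: "d > 0" and square: "\<And>a b. \<bar>a\<bar> \<le> d \<Longrightarrow> \<bar>b\<bar> \<le> d \<Longrightarrow> p + a *\<^sub>R v + b *\<^sub>R w \<in> S"
    using open_contains_parallelogram[OF S p] by blast
  have line: "p + s *\<^sub>R w \<in> S" if "s \<in> {-d..d}" for s
    using square[of 0 s] that by auto
  have "((\<lambda>b. dir_deriv f v (p + b *\<^sub>R w) - dir_deriv f v (p + (-d) *\<^sub>R w)) has_vector_derivative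
      dir_deriv (dir_deriv f v) w p) (at 0 within {-d..d})"
    using has_field_derivative_dir_deriv_line[of "dir_deriv f v" p 0 w] reg(2)[OF p] d
    by (auto simp: has_real_derivative_iff_has_vector_derivative[symmetric] intro!: derivative_eq_intros)
  moreover have "continuous_on {-d..d} (\<lambda>s. dir_deriv (dir_deriv f w) v (p + s *\<^sub>R w))"
  proof (rule continuous_on_compose2[OF reg(4)])
    show "continuous_on {-d..d} (\<lambda>s. p + s *\<^sub>R w)" by (intro continuous_intros)
    show "(\<lambda>s. p + s *\<^sub>R w) ` {-d..d} \<subseteq> S" using line by auto
  qed
  then have "((\<lambda>b. integral {-d..b} (\<lambda>s. dir_deriv (dir_deriv f w) v (p + s *\<^sub>R w)))
      has_vector_derivative dir_deriv (dir_deriv f w) v p) (at 0 within {-d..d})"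
    using integral_has_vector_derivative[of "-d" d _ 0] d by fastforce
  then have "((\<lambda>b. dir_deriv f v (p + b *\<^sub>R w) - dir_deriv f v (p + (-d) *\<^sub>R w))
      has_vector_derivative dir_deriv (dir_deriv f w) v p) (at 0 within {-d..d})"
  proof (rule has_vector_derivative_transform[rotated 2])
    fix b :: real assume "b \<in> {-d..d}"
    then show "dir_deriv f v (p + b *\<^sub>R w) - dir_deriv f v (p + (-d) *\<^sub>R w)
        = integral {-d..b} (\<lambda>s. dir_deriv (dir_deriv f w) v (p + s *\<^sub>R w))"
      by (intro dir_deriv_line_integral_dir_deriv[OF S f d(1) _ square]) auto
  qed (use d in simp)
  ultimately show ?thesis
    using d vector_derivative_unique_within_closed_interval[of "-d" d 0, unfolded cbox_interval] by simp
qed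

lemma smooth_on_dir_deriv_swap:
  "open S \<Longrightarrow> smooth_on S f \<Longrightarrow> p \<in> S \<Longrightarrow> dir_deriv (dir_deriv f v) w p = dir_deriv (dir_deriv f w) v p"
  unfolding smooth_on_def by (blast intro: Ck_on_2_dir_deriv_swap)

section \<open>Integrals over the torus\<close>

lemma cbox_unit_Int_le:
  fixes k :: "'a::euclidean_space"
  assumes "k \<in> Basis" "c \<le> 1"
  shows "cbox 0 One \<inter> {x. x \<bullet> k \<le> c} = cbox 0 (One - (1 - c) *\<^sub>R k)"
  unfolding interval_split[OF assms(1)]
  by (rule arg_cong[where f="cbox 0"], rule euclidean_eqI)
    (use assms in \<open>auto simp: inner_sum_left_Basis inner_diff_left inner_Basis\<close>)

lemma cbox_unit_Int_ge:
  fixes k :: "'a::euclidean_space"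
  assumes "k \<in> Basis" "0 \<le> c"
  shows "cbox 0 One \<inter> {x. c \<le> x \<bullet> k} = cbox (c *\<^sub>R k) One"
  unfolding interval_split[OF assms(1)]
  by (rule arg_cong[where f="\<lambda>a. cbox a One"], rule euclidean_eqI)
    (use assms in \<open>auto simp: inner_sum_left_Basis inner_Basis\<close>)

lemma integral_cbox_shift: "integral (cbox a b) (\<lambda>x. g (x + c)) = integral (cbox (a + c) (b + c)) g"
  using integral_shift_cbox_plus[of a b g c] by (simp add: o_def add.commute)

text \<open>Cut the cube at \<open>x \<bullet> k = 1 - h\<close>: the lower piece is translated onto \<open>{x \<bullet> k \<ge> h}\<close> and,
  by periodicity, the upper piece onto \<open>{x \<bullet> k \<le> h}\<close>.\<close>

lemma integral_unit_cube_shift_periodic: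
  fixes g :: "'a::euclidean_space \<Rightarrow> real"
  assumes cont: "continuous_on UNIV g" and k: "k \<in> Basis" and per: "\<And>x. g (x + k) = g x"
    and h: "0 \<le> h" "h \<le> 1"
  shows "integral (cbox 0 One) (\<lambda>x. g (x + h *\<^sub>R k)) = integral (cbox 0 One) g"
proof -
  have int: "f integrable_on cbox 0 One" if "continuous_on UNIV f" for f :: "'a \<Rightarrow> real"
    using that by (intro integrable_continuous) (auto intro: continuous_on_subset)
  have per': "g (x + h *\<^sub>R k) = g (x + (h - 1) *\<^sub>R k)" for x
    using per[of "x + (h - 1) *\<^sub>R k"] by (simp add: algebra_simps)
  have lower: "cbox 0 One \<inter> {x. x \<bullet> k \<le> 1 - h} = cbox 0 (One - h *\<^sub>R k)"
    using cbox_unit_Int_le[OF k, of "1 - h"] h by simp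
  have upper: "cbox 0 One \<inter> {x. 1 - h \<le> x \<bullet> k} = cbox ((1 - h) *\<^sub>R k) One"
    using cbox_unit_Int_ge[OF k, of "1 - h"] h by simp
  have "integral (cbox 0 One) (\<lambda>x. g (x + h *\<^sub>R k))
      = integral (cbox 0 One \<inter> {x. x \<bullet> k \<le> 1 - h}) (\<lambda>x. g (x + h *\<^sub>R k))
      + integral (cbox 0 One \<inter> {x. 1 - h \<le> x \<bullet> k}) (\<lambda>x. g (x + h *\<^sub>R k))"
    using k by (intro integral_split int continuous_on_compose2[OF cont]) (auto intro!: continuous_intros)
  also have "integral (cbox 0 One \<inter> {x. x \<bullet> k \<le> 1 - h}) (\<lambda>x. g (x + h *\<^sub>R k))
      = integral (cbox (h *\<^sub>R k) One) g"
    unfolding lower integral_cbox_shift by simp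
  also have "\<dots> = integral (cbox 0 One \<inter> {x. h \<le> x \<bullet> k}) g"
    using cbox_unit_Int_ge[OF k h(1)] by simp
  also have "integral (cbox 0 One \<inter> {x. 1 - h \<le> x \<bullet> k}) (\<lambda>x. g (x + h *\<^sub>R k))
      = integral (cbox ((1 - h) *\<^sub>R k + (h - 1) *\<^sub>R k) (One + (h - 1) *\<^sub>R k)) g"
    unfolding upper per' by (rule integral_cbox_shift)
  also have "\<dots> = integral (cbox 0 (One - (1 - h) *\<^sub>R k)) g"
    by (simp add: algebra_simps)
  also have "\<dots> = integral (cbox 0 One \<inter> {x. x \<bullet> k \<le> h}) g"
    using cbox_unit_Int_le[OF k h(2)] by simp
  also have "integral (cbox 0 One \<inter> {x. h \<le> x \<bullet> k}) g + integral (cbox 0 One \<inter> {x. x \<bullet> k \<le> h}) g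
      = integral (cbox 0 One) g"
    using integral_split[OF int[OF cont] k, of h] by simp
  finally show ?thesis .
qed

definition unit_x :: "'n \<Rightarrow> real \<times> (real^'n::finite)" where
  "unit_x j = (0, axis j 1)"

definition unit_t :: "real \<times> (real^'n::finite)" where
  "unit_t = (1, 0)"

abbreviation Dx :: "'n::finite \<Rightarrow> (real \<times> (real^'n) \<Rightarrow> real) \<Rightarrow> real \<times> (real^'n) \<Rightarrow> real" where
  "Dx j f \<equiv> dir_deriv f (unit_x j)"

abbreviation Dt :: "(real \<times> (real^'n::finite) \<Rightarrow> real) \<Rightarrow> real \<times> (real^'n) \<Rightarrow> real" where
  "Dt f \<equiv> dir_deriv f unit_t"

lemma add_scaleR_unit_x: "(t, x) + h *\<^sub>R unit_x j = (t, x + h *\<^sub>R axis j 1)"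
  by (simp add: unit_x_def)

lemma add_scaleR_unit_t: "(0, x) + s *\<^sub>R unit_t = (s, x)"
  by (simp add: unit_t_def)

definition smooth_periodic :: "real \<Rightarrow> real \<Rightarrow> (real \<times> (real^'n::finite) \<Rightarrow> real) \<Rightarrow> bool" where
  "smooth_periodic a b K \<longleftrightarrow>
    smooth_on ({a<..<b} \<times> UNIV) K \<and> (\<forall>s\<in>{a<..<b}. periodic1 (\<lambda>x. K (s, x)))"

definition torus_int :: "real \<Rightarrow> (real \<times> (real^'n::finite) \<Rightarrow> real) \<Rightarrow> real" where
  "torus_int t K = integral (cbox 0 One) (\<lambda>x. K (t, x))"

lemma open_slab[simp]: "open ({a<..<b::real} \<times> (UNIV :: (real^'n::finite) set))"
  by (rule open_Times) simp_all

lemma smooth_periodic_const[simp]: "smooth_periodic a b (\<lambda>p. c)"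
  by (simp add: smooth_periodic_def periodic1_def)

lemma smooth_periodic_add[simp]:
  "smooth_periodic a b f \<Longrightarrow> smooth_periodic a b g \<Longrightarrow> smooth_periodic a b (\<lambda>p. f p + g p)"
  by (simp add: smooth_periodic_def periodic1_def)

lemma smooth_periodic_diff[simp]:
  "smooth_periodic a b f \<Longrightarrow> smooth_periodic a b g \<Longrightarrow> smooth_periodic a b (\<lambda>p. f p - g p)"
  by (simp add: smooth_periodic_def periodic1_def)

lemma smooth_periodic_mult[simp]:
  "smooth_periodic a b f \<Longrightarrow> smooth_periodic a b g \<Longrightarrow> smooth_periodic a b (\<lambda>p. f p * g p)"
  by (simp add: smooth_periodic_def periodic1_def)

lemma smooth_periodic_divide[simp]: "smooth_periodic a b f \<Longrightarrow> smooth_periodic a b (\<lambda>p. f p / c)"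
  using smooth_periodic_mult[of a b f "\<lambda>p. 1 / c"] by simp

lemma smooth_periodic_minus[simp]: "smooth_periodic a b f \<Longrightarrow> smooth_periodic a b (\<lambda>p. - f p)"
  by (simp add: smooth_periodic_def periodic1_def)

lemma smooth_periodic_power[simp]: "smooth_periodic a b f \<Longrightarrow> smooth_periodic a b (\<lambda>p. f p ^ n)"
  by (simp add: smooth_periodic_def periodic1_def)

lemma smooth_periodic_sum[simp]:
  "(\<And>i. smooth_periodic a b (f i)) \<Longrightarrow> smooth_periodic a b (\<lambda>p. \<Sum>i\<in>I. f i p)"
  by (simp add: smooth_periodic_def periodic1_def)

lemma smooth_periodic_ln:
  "smooth_periodic a b f \<Longrightarrow> (\<And>p. p \<in> {a<..<b} \<times> UNIV \<Longrightarrow> f p > 0) \<Longrightarrow>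
    smooth_periodic a b (\<lambda>p. ln (f p))"
  by (simp add: smooth_periodic_def periodic1_def smooth_on_ln)

lemma smooth_periodic_differentiable_at:
  "smooth_periodic a b f \<Longrightarrow> p \<in> {a<..<b} \<times> UNIV \<Longrightarrow> f differentiable (at p)"
  unfolding smooth_periodic_def by (auto intro: smooth_on_differentiable_at[OF open_slab])

lemma smooth_periodic_continuous_on: "smooth_periodic a b f \<Longrightarrow> continuous_on ({a<..<b} \<times> UNIV) f"
  unfolding smooth_periodic_def by (auto intro: smooth_on_imp_continuous_on)

lemma smooth_periodic_continuous_slice:
  "smooth_periodic a b f \<Longrightarrow> t \<in> {a<..<b} \<Longrightarrow> continuous_on UNIV (\<lambda>x. f (t, x))"
  by (rule continuous_on_compose2[OF smooth_periodic_continuous_on]) (auto intro!: continuous_intros)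

lemma smooth_periodic_integrable:
  "smooth_periodic a b f \<Longrightarrow> t \<in> {a<..<b} \<Longrightarrow> (\<lambda>x. f (t, x)) integrable_on cbox 0 One"
  by (intro integrable_continuous continuous_on_subset[OF smooth_periodic_continuous_slice]) auto

lemma smooth_periodic_dir_deriv_swap:
  "smooth_periodic a b f \<Longrightarrow> p \<in> {a<..<b} \<times> UNIV \<Longrightarrow>
    dir_deriv (dir_deriv f v) w p = dir_deriv (dir_deriv f w) v p"
  unfolding smooth_periodic_def by (auto intro: smooth_on_dir_deriv_swap[OF open_slab])

text \<open>A translation in space commutes with differentiation, so derivatives stay periodic.\<close>

lemma smooth_periodic_dir_deriv[simp]:
  fixes f :: "real \<times> (real^'n::finite) \<Rightarrow> real"
  assumes f: "smooth_periodic a b f"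
  shows "smooth_periodic a b (dir_deriv f v)"
proof -
  have "dir_deriv f v (s, x + axis i 1) = dir_deriv f v (s, x)" if s: "s \<in> {a<..<b}" for s x i
  proof -
    define c :: "real \<times> (real^'n)" where "c = (0, axis i 1)"
    have shift: "(s, x) + c = (s, x + axis i 1)" by (simp add: c_def)
    have "f differentiable (at ((s, x) + c))"
      using s by (simp add: shift smooth_periodic_differentiable_at[OF f])
    then have deriv: "((\<lambda>y. f (y + c)) has_derivative (\<lambda>w. dir_deriv f w ((s, x) + c))) (at (s, x))"
      using has_derivative_compose[OF has_derivative_add_const[OF has_derivative_ident]
          has_derivative_dir_deriv] by blast
    have "dir_deriv f v ((s, x) + c) = dir_deriv (\<lambda>y. f (y + c)) v (s, x)"
      by (rule dir_deriv_eqI[OF deriv, symmetric])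
    also have "\<dots> = dir_deriv f v (s, x)"
    proof (rule dir_deriv_cong_open[OF open_slab])
      fix y :: "real \<times> (real^'n)" assume "y \<in> {a<..<b} \<times> UNIV"
      then show "f (y + c) = f y"
        using f unfolding smooth_periodic_def periodic1_def c_def by (cases y) auto
    qed (use s deriv in \<open>auto simp: differentiable_def\<close>)
    finally show ?thesis by (simp add: shift)
  qed
  with f show ?thesis by (simp add: smooth_periodic_def periodic1_def)
qed

lemma has_field_derivative_torus_int_shift:
  fixes f :: "real \<times> (real^'n::finite) \<Rightarrow> real"
  assumes f: "smooth_periodic a b f" and t: "t \<in> {a<..<b}"
  shows "((\<lambda>h. integral (cbox 0 One) (\<lambda>x. f (t, x + h *\<^sub>R axis j 1))) has_field_derivative
    torus_int t (Dx j f)) (at 0)"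
proof -
  let ?U = "{-1<..<(1::real)}"
  have "((\<lambda>h. integral (cbox 0 One) (\<lambda>x. f (t, x + h *\<^sub>R axis j 1))) has_field_derivative
      integral (cbox 0 One) (\<lambda>x. Dx j f (t, x + 0 *\<^sub>R axis j 1))) (at 0 within ?U)"
  proof (rule leibniz_rule_field_derivative)
    fix h x assume "h \<in> ?U"
    have "f differentiable (at ((t, x) + h *\<^sub>R unit_x j))"
      using t by (simp add: add_scaleR_unit_x smooth_periodic_differentiable_at[OF f])
    from has_field_derivative_dir_deriv_line[OF this, of ?U]
    show "((\<lambda>h. f (t, x + h *\<^sub>R axis j 1)) has_field_derivative Dx j f (t, x + h *\<^sub>R axis j 1))
        (at h within ?U)"
      by (simp add: add_scaleR_unit_x)
  next
    fix h :: real
    show "(\<lambda>x. f (t, x + h *\<^sub>R axis j 1)) integrable_on cbox 0 One"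
      by (intro integrable_continuous continuous_on_subset[OF continuous_on_compose2[OF
            smooth_periodic_continuous_slice[OF f t]]]) (auto intro!: continuous_intros)
  next
    have "continuous_on (?U \<times> cbox 0 One) (\<lambda>y. Dx j f ((\<lambda>(h, x). (t, x + h *\<^sub>R axis j 1)) y))"
      using t by (intro continuous_on_compose2[OF smooth_periodic_continuous_on[OF
            smooth_periodic_dir_deriv[OF f]]]) (auto simp: split_beta intro!: continuous_intros)
    then show "continuous_on (?U \<times> cbox 0 One) (\<lambda>(h, x). Dx j f (t, x + h *\<^sub>R axis j 1))"
      by (simp add: split_beta)
  qed auto
  then show ?thesis
    by (simp add: torus_int_def at_within_open[of 0 ?U])
qed

text \<open>The mean of a periodic function does not move under translation, so its derivative
  vanishes.\<close>

lemma torus_int_Dx_eq_0: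
  fixes f :: "real \<times> (real^'n::finite) \<Rightarrow> real"
  assumes f: "smooth_periodic a b f" and t: "t \<in> {a<..<b}"
  shows "torus_int t (Dx j f) = 0"
proof -
  define k :: "real^'n" where "k = axis j 1"
  have cont: "continuous_on UNIV (\<lambda>x. f (t, x))"
    by (rule smooth_periodic_continuous_slice[OF f t])
  have per: "f (t, x + k) = f (t, x)" for x
    using f t unfolding smooth_periodic_def periodic1_def k_def by auto
  have shift_invariant: "integral (cbox 0 One) (\<lambda>x. f (t, x + h *\<^sub>R k)) = torus_int t f"
    if "h \<in> {-1<..<1}" for h
  proof (cases "h \<ge> 0")
    case True
    then show ?thesis unfolding torus_int_def k_def
      using integral_unit_cube_shift_periodic[OF cont, of "axis j 1" h] per[unfolded k_def] that
      by simp
  next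
    case False
    have "f (t, x + h *\<^sub>R k) = f (t, x + (h + 1) *\<^sub>R k)" for x
      using per[of "x + h *\<^sub>R k"] by (simp add: algebra_simps)
    then show ?thesis unfolding torus_int_def k_def
      using integral_unit_cube_shift_periodic[OF cont, of "axis j 1" "h + 1"] per[unfolded k_def]
        that False
      by simp
  qed
  have "((\<lambda>h. integral (cbox 0 One) (\<lambda>x. f (t, x + h *\<^sub>R k))) has_field_derivative 0) (at 0)"
    by (rule has_field_derivative_transform_within_open[OF DERIV_const, of "{-1<..<1}"])
      (auto simp: shift_invariant)
  with has_field_derivative_torus_int_shift[OF f t, of j] show ?thesis
    unfolding k_def by (rule DERIV_unique)
qed

lemma torus_int_minus[simp]: "torus_int t (\<lambda>p. - f p) = - torus_int t f"
  unfolding torus_int_def by (simp add: integral_neg)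

lemma torus_int_cmult[simp]: "torus_int t (\<lambda>p. c * f p) = c * torus_int t f"
  unfolding torus_int_def by simp

lemma torus_int_divide[simp]: "torus_int t (\<lambda>p. f p / c) = torus_int t f / c"
  using torus_int_cmult[of t "1 / c" f] by simp

lemma torus_int_cong: "(\<And>x. f (t, x) = g (t, x)) \<Longrightarrow> torus_int t f = torus_int t g"
  unfolding torus_int_def by simp

context
  fixes a b t :: real
  assumes t: "t \<in> {a<..<b}"
begin

lemma torus_int_add[simp]:
  "smooth_periodic a b f \<Longrightarrow> smooth_periodic a b g \<Longrightarrow>
    torus_int t (\<lambda>p. f p + g p) = torus_int t f + torus_int t g"
  unfolding torus_int_def using t by (intro integral_add smooth_periodic_integrable)

lemma torus_int_diff[simp]:
  "smooth_periodic a b f \<Longrightarrow> smooth_periodic a b g \<Longrightarrow>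
    torus_int t (\<lambda>p. f p - g p) = torus_int t f - torus_int t g"
  unfolding torus_int_def using t by (intro integral_diff smooth_periodic_integrable)

lemma torus_int_sum[simp]:
  "finite I \<Longrightarrow> (\<And>i. smooth_periodic a b (f i)) \<Longrightarrow>
    torus_int t (\<lambda>p. \<Sum>i\<in>I. f i p) = (\<Sum>i\<in>I. torus_int t (f i))"
  unfolding torus_int_def using t by (intro integral_sum smooth_periodic_integrable) auto

lemma torus_int_by_parts:
  assumes f: "smooth_periodic a b f" and g: "smooth_periodic a b g"
  shows "torus_int t (\<lambda>p. f p * Dx j g p) = - torus_int t (\<lambda>p. Dx j f p * g p)"
proof -
  have "0 = torus_int t (Dx j (\<lambda>p. f p * g p))"
    using f g t by (intro torus_int_Dx_eq_0[of a b, symmetric]) simp_all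
  also have "\<dots> = torus_int t (\<lambda>p. f p * Dx j g p + Dx j f p * g p)"
    using t by (intro torus_int_cong dir_deriv_mult smooth_periodic_differentiable_at[OF f]
        smooth_periodic_differentiable_at[OF g]) auto
  also have "\<dots> = torus_int t (\<lambda>p. f p * Dx j g p) + torus_int t (\<lambda>p. Dx j f p * g p)"
    using f g by simp
  finally show ?thesis by linarith
qed

lemma torus_int_Dxx_mult_Dxx:
  assumes f: "smooth_periodic a b f"
  shows "torus_int t (\<lambda>p. Dx i (Dx i f) p * Dx k (Dx k f) p) = torus_int t (\<lambda>p. (Dx k (Dx i f) p)^2)"
proof -
  have swap: "dir_deriv (dir_deriv g v) w (t, x) = dir_deriv (dir_deriv g w) v (t, x)"
    if "smooth_periodic a b g" for g v w x
    using that t by (intro smooth_periodic_dir_deriv_swap) auto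
  have "torus_int t (\<lambda>p. Dx i (Dx i f) p * Dx k (Dx k f) p)
      = torus_int t (\<lambda>p. Dx k (Dx k f) p * Dx i (Dx i f) p)"
    by (rule torus_int_cong) simp
  also have "\<dots> = - torus_int t (\<lambda>p. Dx i (Dx k (Dx k f)) p * Dx i f p)"
    using f by (intro torus_int_by_parts) simp_all
  also have "torus_int t (\<lambda>p. Dx i (Dx k (Dx k f)) p * Dx i f p)
      = torus_int t (\<lambda>p. Dx i f p * Dx k (Dx i (Dx k f)) p)"
    using swap[of "Dx k f" "unit_x k" "unit_x i"] f by (intro torus_int_cong) simp
  also have "\<dots> = - torus_int t (\<lambda>p. Dx k (Dx i f) p * Dx i (Dx k f) p)"
    using f by (intro torus_int_by_parts) simp_all
  also have "torus_int t (\<lambda>p. Dx k (Dx i f) p * Dx i (Dx k f) p) = torus_int t (\<lambda>p. (Dx k (Dx i f) p)^2)"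
    using swap[of f "unit_x k" "unit_x i"] f by (intro torus_int_cong) (simp add: power2_eq_square)
  finally show ?thesis by simp
qed

lemma torus_int_Dx_mult_Dx_laplacian:
  assumes f: "smooth_periodic a b f"
  shows "torus_int t (\<lambda>p. Dx i f p * Dx i (\<lambda>q. \<Sum>k\<in>UNIV. Dx k (Dx k f) q) p)
    = - (\<Sum>k\<in>UNIV. torus_int t (\<lambda>p. (Dx k (Dx i f) p)^2))"
proof -
  have "torus_int t (\<lambda>p. Dx i f p * Dx i (\<lambda>q. \<Sum>k\<in>UNIV. Dx k (Dx k f) q) p)
      = - torus_int t (\<lambda>p. Dx i (Dx i f) p * (\<Sum>k\<in>UNIV. Dx k (Dx k f) p))"
    using f by (intro torus_int_by_parts) simp_all
  also have "torus_int t (\<lambda>p. Dx i (Dx i f) p * (\<Sum>k\<in>UNIV. Dx k (Dx k f) p))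
      = torus_int t (\<lambda>p. \<Sum>k\<in>UNIV. Dx i (Dx i f) p * Dx k (Dx k f) p)"
    by (rule torus_int_cong) (simp add: sum_distrib_left)
  also have "\<dots> = (\<Sum>k\<in>UNIV. torus_int t (\<lambda>p. (Dx k (Dx i f) p)^2))"
    using f by (simp add: torus_int_Dxx_mult_Dxx)
  finally show ?thesis .
qed

end

lemma has_field_derivative_torus_int:
  assumes f: "smooth_periodic a b f" and t: "t \<in> {a<..<b}"
  shows "((\<lambda>s. torus_int s f) has_field_derivative torus_int t (Dt f)) (at t)"
proof -
  have "((\<lambda>s. integral (cbox 0 One) (\<lambda>x. f (s, x))) has_field_derivative
      integral (cbox 0 One) (\<lambda>x. Dt f (t, x))) (at t within {a<..<b})"
  proof (rule leibniz_rule_field_derivative)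
    fix s x assume s: "s \<in> {a<..<b}"
    have "f differentiable (at ((0, x) + s *\<^sub>R unit_t))"
      using s by (simp add: add_scaleR_unit_t smooth_periodic_differentiable_at[OF f])
    from has_field_derivative_dir_deriv_line[OF this, of "{a<..<b}"]
    show "((\<lambda>s. f (s, x)) has_field_derivative Dt f (s, x)) (at s within {a<..<b})"
      by (simp add: add_scaleR_unit_t)
  next
    show "(\<lambda>x. f (s, x)) integrable_on cbox 0 One" if "s \<in> {a<..<b}" for s
      using smooth_periodic_integrable[OF f that] .
  next
    have "continuous_on ({a<..<b} \<times> cbox 0 One) (Dt f)"
      by (rule continuous_on_subset[OF smooth_periodic_continuous_on[OF smooth_periodic_dir_deriv[OF f]]])
        auto
    then show "continuous_on ({a<..<b} \<times> cbox 0 One) (\<lambda>(s, x). Dt f (s, x))"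
      by (simp add: split_beta)
  qed (use t in auto)
  then show ?thesis unfolding torus_int_def using t by (simp add: at_within_open[of t "{a<..<b}"])
qed

lemma pd_eq_Dx:
  assumes "smooth_periodic a b f" "s \<in> {a<..<b}"
  shows "pd i (\<lambda>x. f (s, x)) y = Dx i f (s, y)"
proof -
  have "f differentiable (at ((s, y) + 0 *\<^sub>R unit_x i))"
    using assms by (simp add: smooth_periodic_differentiable_at)
  from has_field_derivative_dir_deriv_line[OF this, of UNIV]
  have "((\<lambda>h. f (s, y + h *\<^sub>R axis i 1)) has_field_derivative Dx i f (s, y)) (at 0)"
    by (simp add: add_scaleR_unit_x)
  then show ?thesis unfolding pd_def by (rule DERIV_imp_deriv)
qed

lemma deriv_eq_Dt:
  assumes "smooth_periodic a b f" "s \<in> {a<..<b}"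
  shows "deriv (\<lambda>s. f (s, y)) s = Dt f (s, y)"
proof -
  have "f differentiable (at ((0, y) + s *\<^sub>R unit_t))"
    using assms by (simp add: add_scaleR_unit_t smooth_periodic_differentiable_at)
  from has_field_derivative_dir_deriv_line[OF this, of UNIV]
  have "((\<lambda>s. f (s, y)) has_field_derivative Dt f (s, y)) (at s)"
    by (simp add: add_scaleR_unit_t)
  then show ?thesis by (rule DERIV_imp_deriv)
qed

section \<open>The Navier--Stokes--Korteweg system on the torus\<close>

text \<open>The fields \<open>\<rho>\<close> and \<open>u\<close> of the theorem, uncurried to functions \<open>R\<close>, \<open>U i\<close> on space-time;
  \<open>t\<close> is the time at which the identity is proved.\<close>

locale korteweg_flow =
  fixes a b t :: real and R :: "real \<times> (real^'n::finite) \<Rightarrow> real"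
    and U :: "'n \<Rightarrow> real \<times> (real^'n) \<Rightarrow> real" and \<nu> \<kappa> :: real
  assumes t: "t \<in> {a<..<b}"
    and R: "smooth_periodic a b R" and U: "\<And>i. smooth_periodic a b (U i)"
    and pos: "\<And>p. p \<in> {a<..<b} \<times> UNIV \<Longrightarrow> R p > 0"
    and mass: "\<And>p. p \<in> {a<..<b} \<times> UNIV \<Longrightarrow> Dt R p + (\<Sum>j\<in>UNIV. Dx j (\<lambda>q. R q * U j q) p) = 0"
    and momentum: "\<And>p i. p \<in> {a<..<b} \<times> UNIV \<Longrightarrow> Dt (\<lambda>q. R q * U i q) p
        + (\<Sum>j\<in>UNIV. Dx j (\<lambda>q. R q * U i q * U j q) p)
        - 2 * \<nu> * (\<Sum>j\<in>UNIV. Dx j (\<lambda>q. R q * ((Dx j (U i) q + Dx i (U j) q) / 2)) p)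
        = \<kappa> * R p * Dx i (\<lambda>q. \<Sum>k\<in>UNIV. Dx k (Dx k R) q) p"
begin

abbreviation "slab \<equiv> {a<..<b} \<times> (UNIV :: (real^'n) set)"
abbreviation "L \<equiv> \<lambda>q. ln (R q)"
abbreviation "Dsym i j \<equiv> \<lambda>q. (Dx j (U i) q + Dx i (U j) q) / 2"

text \<open>\<open>C = div (\<rho> u) / \<rho> = div u + u \<bullet> \<nabla> log \<rho>\<close>, so that \<open>\<partial>\<^sub>t log \<rho> = - C\<close>.\<close>

definition C :: "real \<times> (real^'n) \<Rightarrow> real" where
  "C = (\<lambda>p. \<Sum>j\<in>UNIV. Dx j L p * U j p + Dx j (U j) p)"

lemma t_bounds[simp]: "a < t" "t < b"
  using t by auto

lemma smooth_periodic_R_U[simp]: "smooth_periodic a b R" "smooth_periodic a b (U i)"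
  using R U by auto

lemma smooth_periodic_L[simp]: "smooth_periodic a b L"
  using smooth_periodic_ln[OF R pos] by simp

lemma smooth_periodic_C[simp]: "smooth_periodic a b C"
  by (simp add: C_def)

lemma dir_deriv_add_slab[simp]:
  "smooth_periodic a b f \<Longrightarrow> smooth_periodic a b g \<Longrightarrow> p \<in> slab \<Longrightarrow>
    dir_deriv (\<lambda>x. f x + g x) v p = dir_deriv f v p + dir_deriv g v p"
  by (intro dir_deriv_add smooth_periodic_differentiable_at)

lemma dir_deriv_diff_slab[simp]:
  "smooth_periodic a b f \<Longrightarrow> smooth_periodic a b g \<Longrightarrow> p \<in> slab \<Longrightarrow>
    dir_deriv (\<lambda>x. f x - g x) v p = dir_deriv f v p - dir_deriv g v p"
  by (intro dir_deriv_diff smooth_periodic_differentiable_at)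

lemma dir_deriv_mult_slab[simp]:
  "smooth_periodic a b f \<Longrightarrow> smooth_periodic a b g \<Longrightarrow> p \<in> slab \<Longrightarrow>
    dir_deriv (\<lambda>x. f x * g x) v p = f p * dir_deriv g v p + dir_deriv f v p * g p"
  by (intro dir_deriv_mult smooth_periodic_differentiable_at)

lemma dir_deriv_minus_slab[simp]:
  "smooth_periodic a b f \<Longrightarrow> p \<in> slab \<Longrightarrow> dir_deriv (\<lambda>x. - f x) v p = - dir_deriv f v p"
  by (intro dir_deriv_minus smooth_periodic_differentiable_at)

lemma dir_deriv_power2_slab[simp]:
  "smooth_periodic a b f \<Longrightarrow> p \<in> slab \<Longrightarrow> dir_deriv (\<lambda>x. (f x)^2) v p = 2 * f p * dir_deriv f v p"
  by (intro dir_deriv_power2 smooth_periodic_differentiable_at)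

lemma dir_deriv_sum_slab[simp]:
  "(\<And>i. smooth_periodic a b (f i)) \<Longrightarrow> p \<in> slab \<Longrightarrow>
    dir_deriv (\<lambda>x. \<Sum>i\<in>I. f i x) v p = (\<Sum>i\<in>I. dir_deriv (f i) v p)"
  by (intro dir_deriv_sum smooth_periodic_differentiable_at)

lemmas torus_int_simps[simp] =
  torus_int_add[OF t] torus_int_diff[OF t] torus_int_sum[OF t]

lemma L_swap: "p \<in> slab \<Longrightarrow> dir_deriv (dir_deriv L v) w p = dir_deriv (dir_deriv L w) v p"
  by (rule smooth_periodic_dir_deriv_swap[OF smooth_periodic_L])

lemma R_swap: "p \<in> slab \<Longrightarrow> dir_deriv (dir_deriv R v) w p = dir_deriv (dir_deriv R w) v p"
  by (rule smooth_periodic_dir_deriv_swap[OF R])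

lemma U_swap: "p \<in> slab \<Longrightarrow> dir_deriv (dir_deriv (U k) v) w p = dir_deriv (dir_deriv (U k) w) v p"
  by (rule smooth_periodic_dir_deriv_swap[OF U])

lemma dir_deriv_R: "p \<in> slab \<Longrightarrow> dir_deriv R v p = R p * dir_deriv L v p"
  using pos[of p] by (simp add: dir_deriv_ln smooth_periodic_differentiable_at[OF R])

lemma Dt_R: "p \<in> slab \<Longrightarrow> Dt R p = - R p * C p"
  using mass[of p]
  by (simp add: C_def dir_deriv_R sum_distrib_left algebra_simps sum.distrib sum_negf eq_neg_iff_add_eq_0)

lemma Dt_L: "p \<in> slab \<Longrightarrow> Dt L p = - C p"
proof -
  assume p: "p \<in> slab"
  then have "R p * Dt L p = R p * (- C p)"
    using dir_deriv_R[of p unit_t] Dt_R[of p] by simp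
  then show ?thesis using pos[OF p] by (simp only: mult_cancel_left) simp
qed

lemma Dx_Dt_L: "p \<in> slab \<Longrightarrow> dir_deriv (Dt L) w p = - dir_deriv C w p"
proof -
  assume p: "p \<in> slab"
  have "dir_deriv (Dt L) w p = dir_deriv (\<lambda>q. - C q) w p"
    using p Dt_L by (intro dir_deriv_cong_open[OF open_slab] smooth_periodic_differentiable_at) auto
  with p show ?thesis by simp
qed

lemma Dt_Dx_L: "p \<in> slab \<Longrightarrow> Dt (dir_deriv L w) p = - dir_deriv C w p"
  using Dx_Dt_L[of p w] L_swap[of p w unit_t] by simp

end

section \<open>Time derivative of the Fisher information\<close>

context korteweg_flow
begin

lemma R_mult_C: "p \<in> slab \<Longrightarrow> R p * C p = (\<Sum>j\<in>UNIV. Dx j (\<lambda>q. R q * U j q) p)"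
  by (simp add: C_def dir_deriv_R sum_distrib_left algebra_simps)

lemma torus_int_R_C_mult:
  assumes "smooth_periodic a b \<phi>"
  shows "torus_int t (\<lambda>p. R p * C p * \<phi> p) = - (\<Sum>j\<in>UNIV. torus_int t (\<lambda>p. R p * U j p * Dx j \<phi> p))"
proof -
  have "torus_int t (\<lambda>p. R p * C p * \<phi> p) = torus_int t (\<lambda>p. \<Sum>j\<in>UNIV. Dx j (\<lambda>q. R q * U j q) p * \<phi> p)"
    by (rule torus_int_cong) (simp add: R_mult_C sum_distrib_right)
  also have "\<dots> = (\<Sum>j\<in>UNIV. torus_int t (\<lambda>p. Dx j (\<lambda>q. R q * U j q) p * \<phi> p))"
    using assms by simp
  also have "\<dots> = (\<Sum>j\<in>UNIV. - torus_int t (\<lambda>p. R p * U j p * Dx j \<phi> p))"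
    by (simp add: torus_int_by_parts[OF t _ assms])
  finally show ?thesis by (simp add: sum_negf)
qed

lemma torus_int_Dt_fisher_expand:
  "torus_int t (Dt (\<lambda>p. \<nu>^2 * R p * (\<Sum>i\<in>UNIV. (Dx i L p)^2))) =
    \<nu>^2 * (- (\<Sum>i\<in>UNIV. torus_int t (\<lambda>p. R p * C p * (Dx i L p)^2))
      - 2 * (\<Sum>i\<in>UNIV. torus_int t (\<lambda>p. R p * Dx i L p * Dx i C p)))"
proof -
  have "torus_int t (Dt (\<lambda>p. \<nu>^2 * R p * (\<Sum>i\<in>UNIV. (Dx i L p)^2))) =
      torus_int t (\<lambda>p. \<nu>^2 * (- (\<Sum>i\<in>UNIV. R p * C p * (Dx i L p)^2)
        - 2 * (\<Sum>i\<in>UNIV. R p * Dx i L p * Dx i C p)))"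
    by (rule torus_int_cong)
      (simp add: Dt_R Dt_Dx_L sum_distrib_left sum_negf algebra_simps sum.distrib sum_subtractf)
  then show ?thesis by simp
qed

lemma torus_int_R_C_mult_Dx_L_sq:
  "torus_int t (\<lambda>p. R p * C p * (Dx i L p)^2)
    = - 2 * (\<Sum>j\<in>UNIV. torus_int t (\<lambda>p. R p * Dx i L p * Dx j (Dx i L) p * U j p))"
proof -
  have "torus_int t (\<lambda>p. R p * U j p * Dx j (\<lambda>q. (Dx i L q)^2) p)
      = torus_int t (\<lambda>p. 2 * (R p * Dx i L p * Dx j (Dx i L) p * U j p))" for j
    by (rule torus_int_cong) (simp add: algebra_simps)
  then show ?thesis
    by (simp add: torus_int_R_C_mult sum_distrib_left sum_negf)
qed

lemma torus_int_R_Dx_L_Dx_C: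
  "torus_int t (\<lambda>p. R p * Dx i L p * Dx i C p) =
    (\<Sum>j\<in>UNIV. torus_int t (\<lambda>p. R p * Dx i L p * Dx j L p * Dx i (U j) p))
    + (\<Sum>j\<in>UNIV. torus_int t (\<lambda>p. R p * Dx i L p * Dx j (Dx i L) p * U j p))
    + (\<Sum>j\<in>UNIV. torus_int t (\<lambda>p. R p * Dx i L p * Dx i (Dx j (U j)) p))"
proof -
  have "torus_int t (\<lambda>p. R p * Dx i L p * Dx i C p) =
      torus_int t (\<lambda>p. (\<Sum>j\<in>UNIV. R p * Dx i L p * Dx j L p * Dx i (U j) p)
        + (\<Sum>j\<in>UNIV. R p * Dx i L p * Dx j (Dx i L) p * U j p)
        + (\<Sum>j\<in>UNIV. R p * Dx i L p * Dx i (Dx j (U j)) p))"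
    by (rule torus_int_cong) (simp add: C_def L_swap sum_distrib_left sum.distrib algebra_simps)
  then show ?thesis by simp
qed

lemma torus_int_Hess_L_R_Dx_U:
  "torus_int t (\<lambda>p. Dx j (Dx i L) p * R p * Dx j (U i) p) =
    - torus_int t (\<lambda>p. R p * Dx j L p * Dx j (Dx i (U i)) p)
    - torus_int t (\<lambda>p. R p * Dx i L p * Dx j L p * Dx j (U i) p)"
proof -
  have "torus_int t (\<lambda>p. Dx j (Dx i L) p * R p * Dx j (U i) p)
      = torus_int t (\<lambda>p. (R p * Dx j (U i) p) * Dx i (Dx j L) p)"
    by (rule torus_int_cong) (simp add: L_swap)
  also have "\<dots> = - torus_int t (\<lambda>p. Dx i (\<lambda>q. R q * Dx j (U i) q) p * Dx j L p)"
    by (rule torus_int_by_parts[OF t]) simp_all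
  also have "torus_int t (\<lambda>p. Dx i (\<lambda>q. R q * Dx j (U i) q) p * Dx j L p) =
      torus_int t (\<lambda>p. R p * Dx j L p * Dx j (Dx i (U i)) p + R p * Dx i L p * Dx j L p * Dx j (U i) p)"
    by (rule torus_int_cong) (simp add: dir_deriv_R U_swap[of _ i "unit_x j" "unit_x i"] algebra_simps)
  finally show ?thesis by simp
qed

text \<open>By the symmetry of the Hessian of \<open>log \<rho>\<close>, both halves of \<open>D(u)\<close> contribute equally.\<close>

lemma torus_int_Hess_L_Dsym:
  "(\<Sum>i\<in>UNIV. \<Sum>j\<in>UNIV. torus_int t (\<lambda>p. Dx j (Dx i L) p * (R p * Dsym i j p)))
    = (\<Sum>i\<in>UNIV. \<Sum>j\<in>UNIV. torus_int t (\<lambda>p. Dx j (Dx i L) p * R p * Dx j (U i) p))"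
proof -
  have split: "torus_int t (\<lambda>p. Dx j (Dx i L) p * (R p * Dsym i j p))
      = torus_int t (\<lambda>p. Dx j (Dx i L) p * R p * Dx j (U i) p) / 2
      + torus_int t (\<lambda>p. Dx j (Dx i L) p * R p * Dx i (U j) p) / 2" for i j
  proof -
    have "torus_int t (\<lambda>p. Dx j (Dx i L) p * (R p * Dsym i j p))
      = torus_int t (\<lambda>p. (Dx j (Dx i L) p * R p * Dx j (U i) p) / 2
          + (Dx j (Dx i L) p * R p * Dx i (U j) p) / 2)"
      by (rule torus_int_cong) (simp add: algebra_simps add_divide_distrib)
    then show ?thesis by simp
  qed
  have "(\<Sum>i\<in>UNIV. \<Sum>j\<in>UNIV. torus_int t (\<lambda>p. Dx j (Dx i L) p * R p * Dx i (U j) p))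
      = (\<Sum>j\<in>UNIV. \<Sum>i\<in>UNIV. torus_int t (\<lambda>p. Dx j (Dx i L) p * R p * Dx i (U j) p))"
    by (rule sum.swap)
  also have "\<dots> = (\<Sum>j\<in>UNIV. \<Sum>i\<in>UNIV. torus_int t (\<lambda>p. Dx i (Dx j L) p * R p * Dx i (U j) p))"
    by (intro sum.cong refl torus_int_cong) (simp add: L_swap)
  finally have swapped: "(\<Sum>i\<in>UNIV. \<Sum>j\<in>UNIV. torus_int t (\<lambda>p. Dx j (Dx i L) p * R p * Dx i (U j) p))
      = (\<Sum>i\<in>UNIV. \<Sum>j\<in>UNIV. torus_int t (\<lambda>p. Dx j (Dx i L) p * R p * Dx j (U i) p))" .
  show ?thesis
    unfolding split sum.distrib sum_divide_distrib[symmetric] swapped by simp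
qed

lemma torus_int_Dt_fisher:
  "torus_int t (Dt (\<lambda>p. \<nu>^2 * R p * (\<Sum>i\<in>UNIV. (Dx i L p)^2))) =
    2 * \<nu>^2 * (\<Sum>i\<in>UNIV. \<Sum>j\<in>UNIV. torus_int t (\<lambda>p. Dx j (Dx i L) p * (R p * Dsym i j p)))"
proof -
  let ?X = "\<Sum>i\<in>UNIV. \<Sum>j\<in>UNIV. torus_int t (\<lambda>p. R p * Dx i L p * Dx j (Dx i L) p * U j p)"
  let ?P = "\<Sum>i\<in>UNIV. \<Sum>j\<in>UNIV. torus_int t (\<lambda>p. R p * Dx i L p * Dx j L p * Dx i (U j) p)"
  let ?Q = "\<Sum>i\<in>UNIV. \<Sum>j\<in>UNIV. torus_int t (\<lambda>p. R p * Dx i L p * Dx i (Dx j (U j)) p)"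
  have "(\<Sum>i\<in>UNIV. torus_int t (\<lambda>p. R p * C p * (Dx i L p)^2)) = - 2 * ?X"
    by (simp add: torus_int_R_C_mult_Dx_L_sq sum_distrib_left)
  moreover have "(\<Sum>i\<in>UNIV. torus_int t (\<lambda>p. R p * Dx i L p * Dx i C p)) = ?P + ?X + ?Q"
    by (simp only: torus_int_R_Dx_L_Dx_C sum.distrib)
  moreover have "(\<Sum>i\<in>UNIV. \<Sum>j\<in>UNIV. torus_int t (\<lambda>p. R p * Dx j L p * Dx j (Dx i (U i)) p)) = ?Q"
    by (rule sum.swap)
  moreover have "(\<Sum>i\<in>UNIV. \<Sum>j\<in>UNIV. torus_int t (\<lambda>p. R p * Dx i L p * Dx j L p * Dx j (U i) p)) = ?P"
    by (subst sum.swap) (simp add: mult.commute mult.left_commute)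
  ultimately show ?thesis
    unfolding torus_int_Dt_fisher_expand torus_int_Hess_L_Dsym torus_int_Hess_L_R_Dx_U
      sum_subtractf sum_negf
    by (simp add: algebra_simps)
qed

end

section \<open>Time derivative of the cross term\<close>

context korteweg_flow
begin

lemma torus_int_Dt_cross_expand:
  "torus_int t (Dt (\<lambda>p. \<nu> * (\<Sum>i\<in>UNIV. U i p * Dx i R p))) =
    \<nu> * ((\<Sum>i\<in>UNIV. torus_int t (\<lambda>p. U i p * Dx i (Dt R) p))
      + (\<Sum>i\<in>UNIV. torus_int t (\<lambda>p. Dt (\<lambda>q. R q * U i q) p * Dx i L p))
      - (\<Sum>i\<in>UNIV. torus_int t (\<lambda>p. Dt R p * U i p * Dx i L p)))"
proof -
  have "torus_int t (Dt (\<lambda>p. \<nu> * (\<Sum>i\<in>UNIV. U i p * Dx i R p))) =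
      torus_int t (\<lambda>p. \<nu> * ((\<Sum>i\<in>UNIV. U i p * Dx i (Dt R) p)
        + (\<Sum>i\<in>UNIV. Dt (\<lambda>q. R q * U i q) p * Dx i L p)
        - (\<Sum>i\<in>UNIV. Dt R p * U i p * Dx i L p)))"
  proof (rule torus_int_cong)
    fix x
    have "Dt (Dx i R) (t, x) = Dx i (Dt R) (t, x)" for i
      by (simp add: R_swap)
    then show "Dt (\<lambda>p. \<nu> * (\<Sum>i\<in>UNIV. U i p * Dx i R p)) (t, x) =
        \<nu> * ((\<Sum>i\<in>UNIV. U i (t, x) * Dx i (Dt R) (t, x))
          + (\<Sum>i\<in>UNIV. Dt (\<lambda>q. R q * U i q) (t, x) * Dx i L (t, x))
          - (\<Sum>i\<in>UNIV. Dt R (t, x) * U i (t, x) * Dx i L (t, x)))"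
      by (simp add: dir_deriv_R[of "(t, x)" "unit_x _"] algebra_simps sum.distrib sum_subtractf)
  qed
  then show ?thesis by simp
qed

lemma torus_int_R_C_sq:
  "(\<Sum>i\<in>UNIV. torus_int t (\<lambda>p. U i p * Dx i (Dt R) p))
    - (\<Sum>i\<in>UNIV. torus_int t (\<lambda>p. Dt R p * U i p * Dx i L p))
    = torus_int t (\<lambda>p. R p * C p * C p)"
proof -
  have "torus_int t (\<lambda>p. U i p * Dx i (Dt R) p) = - torus_int t (\<lambda>p. Dx i (U i) p * Dt R p)" for i
    by (rule torus_int_by_parts[OF t]) simp_all
  moreover have "torus_int t (\<lambda>p. R p * C p * C p)
      = - torus_int t (\<lambda>p. \<Sum>i\<in>UNIV. Dx i (U i) p * Dt R p + Dt R p * U i p * Dx i L p)"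
  proof -
    have "torus_int t (\<lambda>p. R p * C p * C p)
        = torus_int t (\<lambda>p. - (\<Sum>i\<in>UNIV. Dx i (U i) p * Dt R p + Dt R p * U i p * Dx i L p))"
    proof (rule torus_int_cong)
      fix x
      have "(\<Sum>i\<in>UNIV. Dx i (U i) (t, x) * Dt R (t, x) + Dt R (t, x) * U i (t, x) * Dx i L (t, x))
          = Dt R (t, x) * C (t, x)"
        by (simp add: C_def sum_distrib_left algebra_simps)
      then show "R (t, x) * C (t, x) * C (t, x)
          = - (\<Sum>i\<in>UNIV. Dx i (U i) (t, x) * Dt R (t, x) + Dt R (t, x) * U i (t, x) * Dx i L (t, x))"
        by (simp add: Dt_R)
    qed
    then show ?thesis by simp
  qed
  ultimately show ?thesis by (simp add: sum.distrib sum_negf)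
qed

text \<open>Testing the momentum equation against \<open>\<nabla> log \<rho>\<close>; the capillarity term
  \<open>\<kappa> \<rho> \<nabla>\<Delta>\<rho> \<bullet> \<nabla> log \<rho> = \<kappa> \<nabla>\<rho> \<bullet> \<nabla>\<Delta>\<rho>\<close> integrates to \<open>- \<kappa> |\<nabla>\<nabla>\<rho>|\<^sup>2\<close>.\<close>

lemma torus_int_momentum_Dx_L:
  "torus_int t (\<lambda>p. Dt (\<lambda>q. R q * U i q) p * Dx i L p) =
    (\<Sum>j\<in>UNIV. torus_int t (\<lambda>p. Dx j (Dx i L) p * (R p * U i p * U j p)))
    - 2 * \<nu> * (\<Sum>j\<in>UNIV. torus_int t (\<lambda>p. Dx j (Dx i L) p * (R p * Dsym i j p)))
    - \<kappa> * (\<Sum>k\<in>UNIV. torus_int t (\<lambda>p. (Dx k (Dx i R) p)^2))"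
proof -
  let ?Lap = "\<lambda>q. \<Sum>k\<in>UNIV. Dx k (Dx k R) q"
  have "torus_int t (\<lambda>p. Dt (\<lambda>q. R q * U i q) p * Dx i L p) =
      torus_int t (\<lambda>p. \<kappa> * (Dx i R p * Dx i ?Lap p)
        - (\<Sum>j\<in>UNIV. Dx i L p * Dx j (\<lambda>q. R q * U i q * U j q) p)
        + 2 * \<nu> * (\<Sum>j\<in>UNIV. Dx i L p * Dx j (\<lambda>q. R q * Dsym i j q) p))"
  proof (rule torus_int_cong)
    fix x
    have p: "(t, x) \<in> slab" by simp
    have M: "Dt (\<lambda>q. R q * U i q) (t, x) = \<kappa> * R (t, x) * Dx i ?Lap (t, x)
        - (\<Sum>j\<in>UNIV. Dx j (\<lambda>q. R q * U i q * U j q) (t, x))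
        + 2 * \<nu> * (\<Sum>j\<in>UNIV. Dx j (\<lambda>q. R q * Dsym i j q) (t, x))"
      using momentum[OF p, of i] by linarith
    show "Dt (\<lambda>q. R q * U i q) (t, x) * Dx i L (t, x) = \<kappa> * (Dx i R (t, x) * Dx i ?Lap (t, x))
        - (\<Sum>j\<in>UNIV. Dx i L (t, x) * Dx j (\<lambda>q. R q * U i q * U j q) (t, x))
        + 2 * \<nu> * (\<Sum>j\<in>UNIV. Dx i L (t, x) * Dx j (\<lambda>q. R q * Dsym i j q) (t, x))"
      unfolding M dir_deriv_R[OF p, of "unit_x i"] sum_distrib_left[symmetric] by (simp only: algebra_simps)
  qed
  also have "\<dots> = \<kappa> * torus_int t (\<lambda>p. Dx i R p * Dx i ?Lap p)
      - (\<Sum>j\<in>UNIV. torus_int t (\<lambda>p. Dx i L p * Dx j (\<lambda>q. R q * U i q * U j q) p))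
      + 2 * \<nu> * (\<Sum>j\<in>UNIV. torus_int t (\<lambda>p. Dx i L p * Dx j (\<lambda>q. R q * Dsym i j q) p))"
    by simp
  also have "\<dots> = - \<kappa> * (\<Sum>k\<in>UNIV. torus_int t (\<lambda>p. (Dx k (Dx i R) p)^2))
      + (\<Sum>j\<in>UNIV. torus_int t (\<lambda>p. Dx j (Dx i L) p * (R p * U i p * U j p)))
      - 2 * \<nu> * (\<Sum>j\<in>UNIV. torus_int t (\<lambda>p. Dx j (Dx i L) p * (R p * Dsym i j p)))"
  proof -
    have "torus_int t (\<lambda>p. Dx i L p * Dx j g p) = - torus_int t (\<lambda>p. Dx j (Dx i L) p * g p)"
      if "smooth_periodic a b g" for j g
      using that by (intro torus_int_by_parts[OF t]) simp_all
    then show ?thesis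
      using torus_int_Dx_mult_Dx_laplacian[OF t R, of i] by (simp add: sum_negf)
  qed
  finally show ?thesis by simp
qed

lemma torus_int_Dt_cross:
  "torus_int t (Dt (\<lambda>p. \<nu> * (\<Sum>i\<in>UNIV. U i p * Dx i R p))) =
    \<nu> * ((\<Sum>i\<in>UNIV. \<Sum>j\<in>UNIV. torus_int t (\<lambda>p. Dx j (Dx i L) p * (R p * U i p * U j p)))
      - 2 * \<nu> * (\<Sum>i\<in>UNIV. \<Sum>j\<in>UNIV. torus_int t (\<lambda>p. Dx j (Dx i L) p * (R p * Dsym i j p)))
      - \<kappa> * (\<Sum>i\<in>UNIV. \<Sum>k\<in>UNIV. torus_int t (\<lambda>p. (Dx k (Dx i R) p)^2))
      + torus_int t (\<lambda>p. R p * C p * C p))"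
  unfolding torus_int_Dt_cross_expand torus_int_R_C_sq[symmetric] torus_int_momentum_Dx_L
  by (simp add: sum_subtractf sum_distrib_left sum.distrib algebra_simps)

end

context korteweg_flow
begin

lemma torus_int_Hess_L_R_U_U:
  "(\<Sum>i\<in>UNIV. \<Sum>j\<in>UNIV. torus_int t (\<lambda>p. Dx j (Dx i L) p * (R p * U i p * U j p))) =
    - torus_int t (\<lambda>p. R p * ((\<Sum>i\<in>UNIV. Dx i L p * U i p) * (\<Sum>i\<in>UNIV. Dx i (U i) p)
      + (\<Sum>i\<in>UNIV. \<Sum>j\<in>UNIV. Dx i L p * Dx j (U i) p * U j p)
      + (\<Sum>i\<in>UNIV. Dx i L p * U i p) * (\<Sum>i\<in>UNIV. Dx i L p * U i p)))"
proof -
  have "torus_int t (\<lambda>p. Dx j (Dx i L) p * (R p * U i p * U j p))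
      = - torus_int t (\<lambda>p. Dx j (\<lambda>q. R q * U i q * U j q) p * Dx i L p)" for i j
  proof -
    have "torus_int t (\<lambda>p. Dx j (Dx i L) p * (R p * U i p * U j p))
        = torus_int t (\<lambda>p. (R p * U i p * U j p) * Dx j (Dx i L) p)"
      by (rule torus_int_cong) simp
    also have "\<dots> = - torus_int t (\<lambda>p. Dx j (\<lambda>q. R q * U i q * U j q) p * Dx i L p)"
      by (rule torus_int_by_parts[OF t]) simp_all
    finally show ?thesis .
  qed
  moreover have "(\<Sum>i\<in>UNIV. \<Sum>j\<in>UNIV. torus_int t (\<lambda>p. Dx j (\<lambda>q. R q * U i q * U j q) p * Dx i L p))
      = torus_int t (\<lambda>p. R p * ((\<Sum>i\<in>UNIV. Dx i L p * U i p) * (\<Sum>i\<in>UNIV. Dx i (U i) p)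
        + (\<Sum>i\<in>UNIV. \<Sum>j\<in>UNIV. Dx i L p * Dx j (U i) p * U j p)
        + (\<Sum>i\<in>UNIV. Dx i L p * U i p) * (\<Sum>i\<in>UNIV. Dx i L p * U i p)))"
  proof -
    have "torus_int t (\<lambda>p. R p * ((\<Sum>i\<in>UNIV. Dx i L p * U i p) * (\<Sum>i\<in>UNIV. Dx i (U i) p)
          + (\<Sum>i\<in>UNIV. \<Sum>j\<in>UNIV. Dx i L p * Dx j (U i) p * U j p)
          + (\<Sum>i\<in>UNIV. Dx i L p * U i p) * (\<Sum>i\<in>UNIV. Dx i L p * U i p)))
        = torus_int t (\<lambda>p. \<Sum>i\<in>UNIV. \<Sum>j\<in>UNIV. Dx j (\<lambda>q. R q * U i q * U j q) p * Dx i L p)"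
      by (rule torus_int_cong)
        (simp add: dir_deriv_R sum_distrib_left sum_distrib_right sum.distrib algebra_simps)
    then show ?thesis by simp
  qed
  ultimately show ?thesis by (simp add: sum_negf)
qed

lemma torus_int_R_Dx_U_Dx_U_by_parts:
  "torus_int t (\<lambda>p. R p * Dx j (U i) p * Dx i (U j) p)
    = - torus_int t (\<lambda>p. R p * Dx j (Dx i (U i)) p * U j p)
      - torus_int t (\<lambda>p. R p * (Dx i L p * Dx j (U i) p * U j p))"
proof -
  have "torus_int t (\<lambda>p. (R p * Dx j (U i) p) * Dx i (U j) p)
      = - torus_int t (\<lambda>p. Dx i (\<lambda>q. R q * Dx j (U i) q) p * U j p)"
    by (rule torus_int_by_parts[OF t]) simp_all
  moreover have "torus_int t (\<lambda>p. Dx i (\<lambda>q. R q * Dx j (U i) q) p * U j p)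
      = torus_int t (\<lambda>p. R p * Dx j (Dx i (U i)) p * U j p + R p * (Dx i L p * Dx j (U i) p * U j p))"
    by (rule torus_int_cong) (simp add: dir_deriv_R U_swap[of _ i "unit_x j" "unit_x i"] algebra_simps)
  ultimately show ?thesis by simp
qed

lemma torus_int_R_U_Dx_div_U:
  "(\<Sum>i\<in>UNIV. torus_int t (\<lambda>p. R p * Dx j (Dx i (U i)) p * U j p))
    = - torus_int t (\<lambda>p. R p * (Dx j (U j) p + Dx j L p * U j p) * (\<Sum>i\<in>UNIV. Dx i (U i) p))"
proof -
  let ?div = "\<lambda>p. \<Sum>i\<in>UNIV. Dx i (U i) p"
  have "(\<Sum>i\<in>UNIV. torus_int t (\<lambda>p. R p * Dx j (Dx i (U i)) p * U j p))
      = torus_int t (\<lambda>p. \<Sum>i\<in>UNIV. R p * Dx j (Dx i (U i)) p * U j p)"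
    by simp
  also have "\<dots> = torus_int t (\<lambda>p. (R p * U j p) * Dx j ?div p)"
    by (rule torus_int_cong) (simp add: sum_distrib_left sum_distrib_right mult_ac)
  also have "\<dots> = - torus_int t (\<lambda>p. Dx j (\<lambda>q. R q * U j q) p * ?div p)"
    by (rule torus_int_by_parts[OF t]) simp_all
  also have "torus_int t (\<lambda>p. Dx j (\<lambda>q. R q * U j q) p * ?div p)
      = torus_int t (\<lambda>p. R p * (Dx j (U j) p + Dx j L p * U j p) * ?div p)"
    by (rule torus_int_cong) (simp add: dir_deriv_R algebra_simps)
  finally show ?thesis .
qed

lemma torus_int_R_Dx_U_Dx_U:
  "(\<Sum>i\<in>UNIV. \<Sum>j\<in>UNIV. torus_int t (\<lambda>p. R p * Dx j (U i) p * Dx i (U j) p)) =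
    torus_int t (\<lambda>p. R p * ((\<Sum>i\<in>UNIV. Dx i (U i) p) + (\<Sum>i\<in>UNIV. Dx i L p * U i p))
        * (\<Sum>i\<in>UNIV. Dx i (U i) p)
      - R p * (\<Sum>i\<in>UNIV. \<Sum>j\<in>UNIV. Dx i L p * Dx j (U i) p * U j p))"
proof -
  let ?div = "\<lambda>p. \<Sum>i\<in>UNIV. Dx i (U i) p"
  have "(\<Sum>i\<in>UNIV. \<Sum>j\<in>UNIV. torus_int t (\<lambda>p. R p * Dx j (U i) p * Dx i (U j) p))
      = - (\<Sum>j\<in>UNIV. \<Sum>i\<in>UNIV. torus_int t (\<lambda>p. R p * Dx j (Dx i (U i)) p * U j p))
        - (\<Sum>i\<in>UNIV. \<Sum>j\<in>UNIV. torus_int t (\<lambda>p. R p * (Dx i L p * Dx j (U i) p * U j p)))"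
    unfolding torus_int_R_Dx_U_Dx_U_by_parts sum_subtractf sum_negf by (subst sum.swap) (rule refl)
  also have "\<dots> = (\<Sum>j\<in>UNIV. torus_int t (\<lambda>p. R p * (Dx j (U j) p + Dx j L p * U j p) * ?div p))
      - torus_int t (\<lambda>p. R p * (\<Sum>i\<in>UNIV. \<Sum>j\<in>UNIV. Dx i L p * Dx j (U i) p * U j p))"
    unfolding torus_int_R_U_Dx_div_U sum_negf by (simp add: sum_distrib_left)
  also have "\<dots> = torus_int t (\<lambda>p. R p * (?div p + (\<Sum>i\<in>UNIV. Dx i L p * U i p)) * ?div p
      - R p * (\<Sum>i\<in>UNIV. \<Sum>j\<in>UNIV. Dx i L p * Dx j (U i) p * U j p))"
  proof -
    have "torus_int t (\<lambda>p. R p * (?div p + (\<Sum>i\<in>UNIV. Dx i L p * U i p)) * ?div p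
        - R p * (\<Sum>i\<in>UNIV. \<Sum>j\<in>UNIV. Dx i L p * Dx j (U i) p * U j p))
      = torus_int t (\<lambda>p. (\<Sum>j\<in>UNIV. R p * (Dx j (U j) p + Dx j L p * U j p) * ?div p)
        - R p * (\<Sum>i\<in>UNIV. \<Sum>j\<in>UNIV. Dx i L p * Dx j (U i) p * U j p))"
      by (rule torus_int_cong) (simp add: sum_distrib_left sum_distrib_right sum.distrib algebra_simps)
    then show ?thesis by simp
  qed
  finally show ?thesis .
qed

lemma torus_int_convection:
  "(\<Sum>i\<in>UNIV. \<Sum>j\<in>UNIV. torus_int t (\<lambda>p. Dx j (Dx i L) p * (R p * U i p * U j p)))
    + torus_int t (\<lambda>p. R p * C p * C p)
    = (\<Sum>i\<in>UNIV. \<Sum>j\<in>UNIV. torus_int t (\<lambda>p. R p * Dx j (U i) p * Dx i (U j) p))"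
proof -
  have "torus_int t (\<lambda>p. R p * C p * C p) = torus_int t (\<lambda>p.
      R p * ((\<Sum>i\<in>UNIV. Dx i L p * U i p) * (\<Sum>i\<in>UNIV. Dx i (U i) p)
        + (\<Sum>i\<in>UNIV. \<Sum>j\<in>UNIV. Dx i L p * Dx j (U i) p * U j p)
        + (\<Sum>i\<in>UNIV. Dx i L p * U i p) * (\<Sum>i\<in>UNIV. Dx i L p * U i p))
      + (R p * ((\<Sum>i\<in>UNIV. Dx i (U i) p) + (\<Sum>i\<in>UNIV. Dx i L p * U i p)) * (\<Sum>i\<in>UNIV. Dx i (U i) p)
        - R p * (\<Sum>i\<in>UNIV. \<Sum>j\<in>UNIV. Dx i L p * Dx j (U i) p * U j p)))"
    by (rule torus_int_cong) (simp add: C_def sum.distrib algebra_simps)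
  then show ?thesis
    unfolding torus_int_Hess_L_R_U_U torus_int_R_Dx_U_Dx_U by simp
qed

lemma energy_identity:
  "torus_int t (Dt (\<lambda>p. \<nu>^2 * R p * (\<Sum>i\<in>UNIV. (Dx i L p)^2)))
      + \<nu> * \<kappa> * torus_int t (\<lambda>p. \<Sum>i\<in>UNIV. \<Sum>j\<in>UNIV. (Dx i (Dx j R) p)^2)
    = - torus_int t (Dt (\<lambda>p. \<nu> * (\<Sum>i\<in>UNIV. U i p * Dx i R p)))
      + torus_int t (\<lambda>p. \<nu> * R p * (\<Sum>i\<in>UNIV. \<Sum>j\<in>UNIV. Dx j (U i) p * Dx i (U j) p))"
proof -
  have "torus_int t (\<lambda>p. \<Sum>i\<in>UNIV. \<Sum>j\<in>UNIV. (Dx i (Dx j R) p)^2)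
      = (\<Sum>i\<in>UNIV. \<Sum>k\<in>UNIV. torus_int t (\<lambda>p. (Dx k (Dx i R) p)^2))"
    by (simp add: sum.swap[of "\<lambda>i j. torus_int t (\<lambda>p. (Dx i (Dx j R) p)^2)"])
  moreover have "torus_int t (\<lambda>p. \<nu> * R p * (\<Sum>i\<in>UNIV. \<Sum>j\<in>UNIV. Dx j (U i) p * Dx i (U j) p))
      = \<nu> * (\<Sum>i\<in>UNIV. \<Sum>j\<in>UNIV. torus_int t (\<lambda>p. R p * Dx j (U i) p * Dx i (U j) p))"
    by (simp add: sum_distrib_left mult.assoc)
  ultimately show ?thesis
    unfolding torus_int_Dt_fisher torus_int_Dt_cross torus_int_convection[symmetric]
    by (simp add: algebra_simps power2_eq_square)
qed

end

locale korteweg_solution =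
  fixes \<rho> :: "real \<Rightarrow> real^'n::finite \<Rightarrow> real" and u :: "real \<Rightarrow> real^'n \<Rightarrow> real^'n"
    and \<nu> \<kappa> a b t :: real
  assumes smooth_rho: "smooth_on ({a<..<b} \<times> UNIV) (\<lambda>p. \<rho> (fst p) (snd p))"
    and smooth_u: "\<And>i. smooth_on ({a<..<b} \<times> UNIV) (\<lambda>p. u (fst p) (snd p) $ i)"
    and per_rho: "\<And>t. periodic1 (\<rho> t)"
    and per_u: "\<And>t. periodic1 (u t)"
    and pos: "\<And>t x. t \<in> {a<..<b} \<Longrightarrow> \<rho> t x > 0"
    and mass: "\<And>t x. t \<in> {a<..<b} \<Longrightarrow>
        deriv (\<lambda>s. \<rho> s x) t + (\<Sum>j\<in>UNIV. pd j (\<lambda>y. \<rho> t y * u t y $ j) x) = 0"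
    and momentum: "\<And>t x i. t \<in> {a<..<b} \<Longrightarrow>
        deriv (\<lambda>s. \<rho> s x * u s x $ i) t
        + (\<Sum>j\<in>UNIV. pd j (\<lambda>y. \<rho> t y * u t y $ i * u t y $ j) x)
        - 2 * \<nu> * (\<Sum>j\<in>UNIV. pd j (\<lambda>y. \<rho> t y * symgrad (u t) y i j) x)
        = \<kappa> * \<rho> t x * pd i (lap (\<rho> t)) x"
    and t: "t \<in> {a<..<b}"
begin

abbreviation "R \<equiv> \<lambda>p. \<rho> (fst p) (snd p)"
abbreviation "U \<equiv> \<lambda>i p. u (fst p) (snd p) $ i"

lemma smooth_periodic_R: "smooth_periodic a b R"
  using smooth_rho per_rho by (simp add: smooth_periodic_def periodic1_def)

lemma smooth_periodic_U: "smooth_periodic a b (U i)"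
  using smooth_u per_u by (simp add: smooth_periodic_def periodic1_def)

lemma pd_rho: "s \<in> {a<..<b} \<Longrightarrow> pd j (\<rho> s) = (\<lambda>y. Dx j R (s, y))"
  using pd_eq_Dx[OF smooth_periodic_R] by (simp add: fun_eq_iff)

lemma pd_u: "s \<in> {a<..<b} \<Longrightarrow> pd j (\<lambda>y. u s y $ i) x = Dx j (U i) (s, x)"
  using pd_eq_Dx[OF smooth_periodic_U] by simp

lemma mass_uncurried:
  assumes "p \<in> {a<..<b} \<times> UNIV"
  shows "Dt R p + (\<Sum>j\<in>UNIV. Dx j (\<lambda>q. R q * U j q) p) = 0"
proof -
  obtain s x where p: "p = (s, x)" and s: "s \<in> {a<..<b}"
    using assms by auto
  have "pd j (\<lambda>y. \<rho> s y * u s y $ j) x = Dx j (\<lambda>q. R q * U j q) (s, x)" for j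
    using pd_eq_Dx[OF smooth_periodic_mult[OF smooth_periodic_R smooth_periodic_U[of j]] s, of j x] by simp
  with mass[OF s, of x] deriv_eq_Dt[OF smooth_periodic_R s, of x] show ?thesis
    by (simp add: p)
qed

lemma momentum_uncurried:
  assumes "p \<in> {a<..<b} \<times> UNIV"
  shows "Dt (\<lambda>q. R q * U i q) p + (\<Sum>j\<in>UNIV. Dx j (\<lambda>q. R q * U i q * U j q) p)
      - 2 * \<nu> * (\<Sum>j\<in>UNIV. Dx j (\<lambda>q. R q * ((Dx j (U i) q + Dx i (U j) q) / 2)) p)
      = \<kappa> * R p * Dx i (\<lambda>q. \<Sum>k\<in>UNIV. Dx k (Dx k R) q) p"
proof -
  obtain s x where p: "p = (s, x)" and s: "s \<in> {a<..<b}"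
    using assms by auto
  note R = smooth_periodic_R and U = smooth_periodic_U
  have "deriv (\<lambda>s. \<rho> s x * u s x $ i) s = Dt (\<lambda>q. R q * U i q) (s, x)"
    using deriv_eq_Dt[OF smooth_periodic_mult[OF R U[of i]] s, of x] by simp
  moreover have "pd j (\<lambda>y. \<rho> s y * u s y $ i * u s y $ j) x = Dx j (\<lambda>q. R q * U i q * U j q) (s, x)" for j
    using pd_eq_Dx[OF smooth_periodic_mult[OF smooth_periodic_mult[OF R U[of i]] U[of j]] s, of j x] by simp
  moreover have "pd j (\<lambda>y. \<rho> s y * symgrad (u s) y i j) x
      = Dx j (\<lambda>q. R q * ((Dx j (U i) q + Dx i (U j) q) / 2)) (s, x)" for j
  proof -
    have sg: "symgrad (u s) y i j = (Dx j (U i) (s, y) + Dx i (U j) (s, y)) / 2" for y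
      using pd_u[OF s] by (simp add: symgrad_def)
    show ?thesis
      using pd_eq_Dx[of a b "\<lambda>q. R q * ((Dx j (U i) q + Dx i (U j) q) / 2)" s j x] s R U
      by (simp add: sg)
  qed
  moreover have "lap (\<rho> s) = (\<lambda>y. \<Sum>k\<in>UNIV. Dx k (Dx k R) (s, y))"
    using pd_rho[OF s] pd_eq_Dx[OF smooth_periodic_dir_deriv[OF R] s] by (intro ext) (simp add: lap_def)
  moreover have "pd i (\<lambda>y. \<Sum>k\<in>UNIV. Dx k (Dx k R) (s, y)) x = Dx i (\<lambda>q. \<Sum>k\<in>UNIV. Dx k (Dx k R) q) (s, x)"
    using pd_eq_Dx[of a b "\<lambda>q. \<Sum>k\<in>UNIV. Dx k (Dx k R) q" s i x] s R by simp
  ultimately show ?thesis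
    using momentum[OF s, of x i] by (simp add: p)
qed

sublocale flow: korteweg_flow a b t R U \<nu> \<kappa>
  using t smooth_periodic_R smooth_periodic_U pos mass_uncurried momentum_uncurried
  by unfold_locales auto

lemma fisher_information_eq:
  "s \<in> {a<..<b} \<Longrightarrow> integral (cbox 0 One) (\<lambda>x. \<nu>^2 * \<rho> s x * (\<Sum>i\<in>UNIV. (pd i (\<lambda>y. ln (\<rho> s y)) x)^2))
    = torus_int s (\<lambda>p. \<nu>^2 * R p * (\<Sum>i\<in>UNIV. (Dx i (\<lambda>q. ln (R q)) p)^2))"
  using pd_eq_Dx[OF flow.smooth_periodic_L] by (simp add: torus_int_def)

lemma cross_term_eq:
  "s \<in> {a<..<b} \<Longrightarrow> integral (cbox 0 One) (\<lambda>x. \<nu> * (\<Sum>i\<in>UNIV. u s x $ i * pd i (\<rho> s) x))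
    = torus_int s (\<lambda>p. \<nu> * (\<Sum>i\<in>UNIV. U i p * Dx i R p))"
  by (simp add: torus_int_def pd_rho)

lemma hessian_eq:
  "integral (cbox 0 One) (\<lambda>x. \<Sum>i\<in>UNIV. \<Sum>j\<in>UNIV. (pd i (pd j (\<rho> t)) x)^2)
    = torus_int t (\<lambda>p. \<Sum>i\<in>UNIV. \<Sum>j\<in>UNIV. (Dx i (Dx j R) p)^2)"
proof -
  have "pd i (pd j (\<rho> t)) x = Dx i (Dx j R) (t, x)" for i j x
    using pd_rho[OF t] pd_eq_Dx[OF smooth_periodic_dir_deriv[OF smooth_periodic_R] t] by simp
  then show ?thesis by (simp add: torus_int_def)
qed

lemma dissipation_eq:
  "integral (cbox 0 One) (\<lambda>x. \<nu> * \<rho> t x * (\<Sum>i\<in>UNIV. \<Sum>j\<in>UNIV.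
      pd j (\<lambda>y. u t y $ i) x * pd i (\<lambda>y. u t y $ j) x))
    = torus_int t (\<lambda>p. \<nu> * R p * (\<Sum>i\<in>UNIV. \<Sum>j\<in>UNIV. Dx j (U i) p * Dx i (U j) p))"
  by (simp add: torus_int_def pd_u[OF t])

end

lemma differentiable_torus_int_transfer:
  assumes "smooth_periodic a b H" "t \<in> {a<..<b}" "\<And>s. s \<in> {a<..<b} \<Longrightarrow> G s = torus_int s H"
  shows "G differentiable (at t) \<and> deriv G t = torus_int t (Dt H)"
proof -
  have "(G has_field_derivative torus_int t (Dt H)) (at t)"
    using assms by (intro has_field_derivative_transform_within_open[OF
          has_field_derivative_torus_int[OF assms(1,2)] open_greaterThanLessThan]) auto
  then show ?thesis
    by (auto simp: DERIV_imp_deriv real_differentiable_def)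
qed

theorem lemma2p2:
  fixes \<rho> :: "real \<Rightarrow> real^'n \<Rightarrow> real"
    and u :: "real \<Rightarrow> real^'n \<Rightarrow> real^'n"
    and \<nu> \<kappa> a b :: real
  assumes dim: "CARD('n) = 2 \<or> CARD('n) = 3"
    and nu: "\<nu> > 0" and kappa: "\<kappa> > 0"
    and ab: "a < b"
    and smooth_rho: "smooth_on ({a<..<b} \<times> UNIV) (\<lambda>p. \<rho> (fst p) (snd p))"
    and smooth_u: "\<And>i. smooth_on ({a<..<b} \<times> UNIV) (\<lambda>p. u (fst p) (snd p) $ i)"
    and per_rho: "\<And>t. periodic1 (\<rho> t)"
    and per_u: "\<And>t. periodic1 (u t)"
    and pos: "\<And>t x. t \<in> {a<..<b} \<Longrightarrow> \<rho> t x > 0"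
    and mass: "\<And>t x. t \<in> {a<..<b} \<Longrightarrow>
        deriv (\<lambda>s. \<rho> s x) t + (\<Sum>j\<in>UNIV. pd j (\<lambda>y. \<rho> t y * u t y $ j) x) = 0"
    and momentum: "\<And>t x i. t \<in> {a<..<b} \<Longrightarrow>
        deriv (\<lambda>s. \<rho> s x * u s x $ i) t
        + (\<Sum>j\<in>UNIV. pd j (\<lambda>y. \<rho> t y * u t y $ i * u t y $ j) x)
        - 2 * \<nu> * (\<Sum>j\<in>UNIV. pd j (\<lambda>y. \<rho> t y * symgrad (u t) y i j) x)
        = \<kappa> * \<rho> t x * pd i (lap (\<rho> t)) x"
    and t: "t \<in> {a<..<b}"
  defines "E \<equiv> \<lambda>s. integral (cbox 0 One)
              (\<lambda>x. \<nu>^2 * \<rho> s x * (\<Sum>i\<in>UNIV. (pd i (\<lambda>y. ln (\<rho> s y)) x)^2))"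
    and "F \<equiv> \<lambda>s. integral (cbox 0 One)
              (\<lambda>x. \<nu> * (\<Sum>i\<in>UNIV. u s x $ i * pd i (\<rho> s) x))"
  shows "E differentiable (at t) \<and> F differentiable (at t) \<and>
         deriv E t + \<nu> * \<kappa> * integral (cbox 0 One)
              (\<lambda>x. \<Sum>i\<in>UNIV. \<Sum>j\<in>UNIV. (pd i (pd j (\<rho> t)) x)^2)
       = - deriv F t + integral (cbox 0 One)
              (\<lambda>x. \<nu> * \<rho> t x * (\<Sum>i\<in>UNIV. \<Sum>j\<in>UNIV.
                     pd j (\<lambda>y. u t y $ i) x * pd i (\<lambda>y. u t y $ j) x))"
proof -
  interpret korteweg_solution \<rho> u \<nu> \<kappa> a b t
    by unfold_locales (fact smooth_rho smooth_u per_rho per_u pos mass momentum t)+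
  have "E differentiable (at t) \<and>
      deriv E t = torus_int t (Dt (\<lambda>p. \<nu>^2 * R p * (\<Sum>i\<in>UNIV. (Dx i (\<lambda>q. ln (R q)) p)^2)))"
    by (rule differentiable_torus_int_transfer[of a b]) (simp_all add: E_def fisher_information_eq t)
  moreover have "F differentiable (at t) \<and>
      deriv F t = torus_int t (Dt (\<lambda>p. \<nu> * (\<Sum>i\<in>UNIV. U i p * Dx i R p)))"
    by (rule differentiable_torus_int_transfer[of a b]) (use cross_term_eq in \<open>simp_all add: F_def t\<close>)
  ultimately show ?thesis
    using flow.energy_identity by (simp add: hessian_eq dissipation_eq)
qed

end
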